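(* Let $\Gamma$ be a finite dynamic game with ordinal preferences and perfect recall, and let $i\in I$. A strategy $s^*_i\in S_i$ is sequentially rational if and only if it is not conditionally B-dominated with respect to $S$.
   Context: A finite dynamic game with ordinal preferences and perfect recall $\Gamma$ consists of: a finite set of players $I$; a finite set $X$ of histories (finite sequences of action profiles, possibly with simultaneous moves), ordered by the prefix relation, with the empty history as root, and the set $Z\subseteq X$ of terminal histories (outcomes); for each player $i$ a partition $H_i$ of the non-terminal histories at which $i$ is active (has at least two available actions) into information sets, such that $i$'s available actions $A_i(h)$ are the same at all histories of $h$; perfect recall; and for each player $i$ a complete, transitive preference relation $\succsim_i$ on $Z$ (with asymmetric part $\succ_i$ and symmetric part $\sim_i$). A standard strategy of $i$ selects an action in $A_i(h)$ for each $h\in H_i$; two standard strategies are behaviorally equivalent if they allow the same information sets and prescribe the same actions there; a strategy of $i$ is an equivalence class of behaviorally equivalent standard strategies. $S_i$ is $i$'s (finite) set of strategies, $S=\prod_{j\in I}S_j$, $S_{-i}=\prod_{j\neq i}S_j$, and $\zeta:S\to Z$ maps a strategy profile to the terminal history it reaches. For $h\in H_i$, $S_i(h)$ and $S_{-i}(h)$ are the sets of strategies of $i$, resp. strategy profiles of the others, that reach $h$ (by perfect recall the profiles reaching $h$ are exactly $S_i(h)\times S_{-i}(h)$). $H_i(s_i):=\{h\in H_i: s_i\in S_i(h)\}$. A restriction is a nonempty set $R=\prod_{j\in I}R_j\subseteq S$. For $h\in H_i$: $R_i(h)=R_i\cap S_i(h)$, $R_{-i}(h)=R_{-i}\cap S_{-i}(h)$,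 $R^i(h)=R_i(h)\times R_{-i}(h)$. Dominance: for a set $P=P_i\times P_{-i}$ with $P_i\subseteq S_i$, $P_{-i}\subseteq S_{-i}$ ($P_{-i}$ need not be a product), $s_i\in P_i$ is weakly dominated relative to $P$ by $t_i\in P_i$ if $\zeta(t_i,s_{-i})\succsim_i\zeta(s_i,s_{-i})$ for all $s_{-i}\in P_{-i}$, with $\succ_i$ for at least one $s_{-i}\in P_{-i}$. $s_i\in P_i$ is B-dominated with respect to $P$ if for every nonempty $Q_{-i}\subseteq P_{-i}$, $s_i$ is weakly dominated relative to $P_i\times Q_{-i}$ by some strategy in $P_i$. Given a restriction $R$, $s_i\in R_i$ is conditionally B-dominated with respect to $R$ if there is $h\in H_i(s_i)$ with $R^i(h)\neq\emptyset$ such that $s_i$ is B-dominated with respect to $R^i(h)$. Utilities and beliefs: $\mathcal U_i$ is the set of functions $u_i:Z\to\mathbb R$ with $u_i(z)\ge u_i(z')\iff z\succsim_i z'$. Let $\mathcal H_i=\{S_{-i}(h):h\in H_i\}$. A conditional probability system (CPS) on $(S_{-i},\mathcal H_i)$ is a family $(\mu_i(\cdot\mid E))_{E\in\mathcal H_i}$ of probability measures on $S_{-i}$ with $\mu_i(E\mid E)=1$ and, whenever $A\subseteq E'\subseteq E$ with $E,E'\in\mathcal H_i$, $\mu_i(A\mid E)=\mu_i(A\mid E')\,\mu_i(E'\mid E)$. A strategy $s^*_i\in S_i$ is sequentially rational if there exist $u_i\in\mathcal U_i$ and a CPS $\mu_i$ such that for every $h\in H_i(s^*_i)$ and every $s_i\in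 S_i(h)$: $\sum_{s_{-i}\in S_{-i}}u_i(\zeta(s^*_i,s_{-i}))\mu_i(\{s_{-i}\}\mid S_{-i}(h))\ge\sum_{s_{-i}\in S_{-i}}u_i(\zeta(s_i,s_{-i}))\mu_i(\{s_{-i}\}\mid S_{-i}(h))$. *)

theory Defs
  imports Complex_Main "HOL-Library.FuncSet" "HOL-Library.Sublist"
begin

section \<open>Finite dynamic games with ordinal preferences (possibly simultaneous moves)\<close>

type_synonym ('i,'a) hist = "('i \<Rightarrow> 'a) list"
type_synonym ('i,'a) iset = "('i,'a) hist set"
type_synonym ('i,'a) stdstrat = "('i,'a) iset \<Rightarrow> 'a"
type_synonym ('i,'a) strat = "('i,'a) stdstrat set"

record ('i,'a) game =
  pl   :: "'i set"
  hist :: "('i,'a) hist set"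
  acts :: "'i \<Rightarrow> ('i,'a) hist \<Rightarrow> 'a set"
  info :: "'i \<Rightarrow> ('i,'a) iset set"
  pref :: "'i \<Rightarrow> ('i,'a) hist \<Rightarrow> ('i,'a) hist \<Rightarrow> bool"

definition terminal :: "('i,'a) game \<Rightarrow> ('i,'a) hist \<Rightarrow> bool" where
  "terminal G x \<longleftrightarrow> x \<in> hist G \<and> (\<forall>a. x @ [a] \<notin> hist G)"

definition Zs :: "('i,'a) game \<Rightarrow> ('i,'a) hist set" where
  "Zs G = {z. terminal G z}"

definition nonterm :: "('i,'a) game \<Rightarrow> ('i,'a) hist \<Rightarrow> bool" where
  "nonterm G x \<longleftrightarrow> x \<in> hist G \<and> \<not> terminal G x"

definition active :: "('i,'a) game \<Rightarrow> 'i \<Rightarrow> ('i,'a) hist \<Rightarrow> bool" where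
  "active G j x \<longleftrightarrow> nonterm G x \<and> j \<in> pl G \<and> (\<exists>a\<in>acts G j x. \<exists>b\<in>acts G j x. a \<noteq> b)"

definition infoset :: "('i,'a) game \<Rightarrow> 'i \<Rightarrow> ('i,'a) hist \<Rightarrow> ('i,'a) iset" where
  "infoset G j x = (THE h. h \<in> info G j \<and> x \<in> h)"

definition actsI :: "('i,'a) game \<Rightarrow> 'i \<Rightarrow> ('i,'a) iset \<Rightarrow> 'a set" where
  "actsI G j h = acts G j (SOME x. x \<in> h)"

definition experience :: "('i,'a) game \<Rightarrow> 'i \<Rightarrow> ('i,'a) hist \<Rightarrow> (('i,'a) iset \<times> 'a) list" where
  "experience G j x = concat (map (\<lambda>k. if active G j (take k x)
        then [(infoset G j (take k x), (x ! k) j)] else []) [0..<length x])"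

definition perfect_recall :: "('i,'a) game \<Rightarrow> bool" where
  "perfect_recall G \<longleftrightarrow> (\<forall>j\<in>pl G. \<forall>h\<in>info G j. \<forall>x\<in>h. \<forall>y\<in>h. experience G j x = experience G j y)"

definition wf_game :: "('i,'a) game \<Rightarrow> bool" where
  "wf_game G \<longleftrightarrow>
     finite (pl G) \<and> finite (hist G) \<and> [] \<in> hist G \<and>
     (\<forall>x y. x @ y \<in> hist G \<longrightarrow> x \<in> hist G) \<and>
     (\<forall>x. nonterm G x \<longrightarrow> (\<forall>j\<in>pl G. acts G j x \<noteq> {}) \<and>
            (\<forall>a. x @ [a] \<in> hist G \<longleftrightarrow> a \<in> (\<Pi>\<^sub>E j\<in>pl G. acts G j x))) \<and>
     (\<forall>j\<in>pl G.
        (\<forall>h\<in>info G j. h \<noteq> {}) \<and>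
        \<Union>(info G j) = {x. active G j x} \<and>
        (\<forall>h\<in>info G j. \<forall>h'\<in>info G j. h \<noteq> h' \<longrightarrow> h \<inter> h' = {}) \<and>
        (\<forall>h\<in>info G j. \<forall>x\<in>h. \<forall>y\<in>h. acts G j x = acts G j y)) \<and>
     perfect_recall G \<and>
     (\<forall>j\<in>pl G.
        (\<forall>z\<in>Zs G. \<forall>z'\<in>Zs G. pref G j z z' \<or> pref G j z' z) \<and>
        (\<forall>z\<in>Zs G. \<forall>z'\<in>Zs G. \<forall>z''\<in>Zs G. pref G j z z' \<longrightarrow> pref G j z' z'' \<longrightarrow> pref G j z z''))"

definition spref :: "('i,'a) game \<Rightarrow> 'i \<Rightarrow> ('i,'a) hist \<Rightarrow> ('i,'a) hist \<Rightarrow> bool" where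
  "spref G j z z' \<longleftrightarrow> pref G j z z' \<and> \<not> pref G j z' z"

definition std_strat :: "('i,'a) game \<Rightarrow> 'i \<Rightarrow> ('i,'a) stdstrat set" where
  "std_strat G j = {\<sigma>. (\<forall>h\<in>info G j. \<sigma> h \<in> actsI G j h) \<and> (\<forall>h. h \<notin> info G j \<longrightarrow> \<sigma> h = undefined)}"

text \<open>Action profile played at history x under a standard strategy profile
  (inactive players have a single feasible action).\<close>
definition move :: "('i,'a) game \<Rightarrow> ('i \<Rightarrow> ('i,'a) stdstrat) \<Rightarrow> ('i,'a) hist \<Rightarrow> ('i \<Rightarrow> 'a)" where
  "move G \<sigma> x = (\<lambda>j. if j \<in> pl G then
        (if active G j x then \<sigma> j (infoset G j x) else (THE a. a \<in> acts G j x))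
      else undefined)"

definition on_path :: "('i,'a) game \<Rightarrow> ('i \<Rightarrow> ('i,'a) stdstrat) \<Rightarrow> ('i,'a) hist \<Rightarrow> bool" where
  "on_path G \<sigma> x \<longleftrightarrow> x \<in> hist G \<and> (\<forall>k<length x. x ! k = move G \<sigma> (take k x))"

definition outcome_std :: "('i,'a) game \<Rightarrow> ('i \<Rightarrow> ('i,'a) stdstrat) \<Rightarrow> ('i,'a) hist" where
  "outcome_std G \<sigma> = (THE z. terminal G z \<and> on_path G \<sigma> z)"

definition allows :: "('i,'a) game \<Rightarrow> 'i \<Rightarrow> ('i,'a) stdstrat \<Rightarrow> ('i,'a) iset \<Rightarrow> bool" where
  "allows G j \<sigma> h \<longleftrightarrow> (\<exists>\<tau>. (\<forall>k\<in>pl G. \<tau> k \<in> std_strat G k) \<and> \<tau> j = \<sigma> \<and>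
                          (\<exists>x\<in>h. prefix x (outcome_std G \<tau>)))"

definition beq :: "('i,'a) game \<Rightarrow> 'i \<Rightarrow> ('i,'a) stdstrat \<Rightarrow> ('i,'a) stdstrat \<Rightarrow> bool" where
  "beq G j \<sigma> \<tau> \<longleftrightarrow> (\<forall>h\<in>info G j. allows G j \<sigma> h \<longleftrightarrow> allows G j \<tau> h) \<and>
                     (\<forall>h\<in>info G j. allows G j \<sigma> h \<longrightarrow> \<sigma> h = \<tau> h)"

definition Strat :: "('i,'a) game \<Rightarrow> 'i \<Rightarrow> ('i,'a) strat set" where
  "Strat G j = std_strat G j // {(\<sigma>, \<tau>). \<sigma> \<in> std_strat G j \<and> \<tau> \<in> std_strat G j \<and> beq G j \<sigma> \<tau>}"

definition Sminus :: "('i,'a) game \<Rightarrow> 'i \<Rightarrow> ('i \<Rightarrow> ('i,'a) strat) set" where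
  "Sminus G i = (\<Pi>\<^sub>E j\<in>pl G - {i}. Strat G j)"

definition zeta :: "('i,'a) game \<Rightarrow> ('i \<Rightarrow> ('i,'a) strat) \<Rightarrow> ('i,'a) hist" where
  "zeta G s = outcome_std G (\<lambda>j. SOME \<sigma>. \<sigma> \<in> s j)"

definition reaches :: "('i,'a) game \<Rightarrow> ('i \<Rightarrow> ('i,'a) strat) \<Rightarrow> ('i,'a) iset \<Rightarrow> bool" where
  "reaches G s h \<longleftrightarrow> (\<exists>x\<in>h. prefix x (zeta G s))"

definition Si_h :: "('i,'a) game \<Rightarrow> 'i \<Rightarrow> ('i,'a) iset \<Rightarrow> ('i,'a) strat set" where
  "Si_h G i h = {si \<in> Strat G i. \<exists>sm\<in>Sminus G i. reaches G (sm(i := si)) h}"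

definition Sm_h :: "('i,'a) game \<Rightarrow> 'i \<Rightarrow> ('i,'a) iset \<Rightarrow> ('i \<Rightarrow> ('i,'a) strat) set" where
  "Sm_h G i h = {sm \<in> Sminus G i. \<exists>si\<in>Strat G i. reaches G (sm(i := si)) h}"

definition Hi_of :: "('i,'a) game \<Rightarrow> 'i \<Rightarrow> ('i,'a) strat \<Rightarrow> ('i,'a) iset set" where
  "Hi_of G i si = {h \<in> info G i. si \<in> Si_h G i h}"

definition wdom :: "('i,'a) game \<Rightarrow> 'i \<Rightarrow> ('i,'a) strat set \<Rightarrow> ('i \<Rightarrow> ('i,'a) strat) set
                    \<Rightarrow> ('i,'a) strat \<Rightarrow> ('i,'a) strat \<Rightarrow> bool" where
  "wdom G i Ps Pm si ti \<longleftrightarrow> si \<in> Ps \<and> ti \<in> Ps \<and>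
     (\<forall>sm\<in>Pm. pref G i (zeta G (sm(i := ti))) (zeta G (sm(i := si)))) \<and>
     (\<exists>sm\<in>Pm. spref G i (zeta G (sm(i := ti))) (zeta G (sm(i := si))))"

definition Bdom :: "('i,'a) game \<Rightarrow> 'i \<Rightarrow> ('i,'a) strat set \<Rightarrow> ('i \<Rightarrow> ('i,'a) strat) set
                    \<Rightarrow> ('i,'a) strat \<Rightarrow> bool" where
  "Bdom G i Ps Pm si \<longleftrightarrow> si \<in> Ps \<and>
     (\<forall>Q. Q \<noteq> {} \<longrightarrow> Q \<subseteq> Pm \<longrightarrow> (\<exists>ti\<in>Ps. wdom G i Ps Q si ti))"

definition cond_Bdom :: "('i,'a) game \<Rightarrow> 'i \<Rightarrow> ('i \<Rightarrow> ('i,'a) strat set) \<Rightarrow> ('i,'a) strat \<Rightarrow> bool" where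
  "cond_Bdom G i R si \<longleftrightarrow> si \<in> R i \<and>
     (\<exists>h\<in>Hi_of G i si.
        let Ri = R i \<inter> Si_h G i h;
            Rm = (\<Pi>\<^sub>E j\<in>pl G - {i}. R j) \<inter> Sm_h G i h
        in Ri \<times> Rm \<noteq> {} \<and> Bdom G i Ri Rm si)"

definition utils :: "('i,'a) game \<Rightarrow> 'i \<Rightarrow> (('i,'a) hist \<Rightarrow> real) set" where
  "utils G i = {u. \<forall>z\<in>Zs G. \<forall>z'\<in>Zs G. u z \<ge> u z' \<longleftrightarrow> pref G i z z'}"

definition cond_events :: "('i,'a) game \<Rightarrow> 'i \<Rightarrow> ('i \<Rightarrow> ('i,'a) strat) set set" where
  "cond_events G i = {Sm_h G i h | h. h \<in> info G i}"

definition cps :: "('i,'a) game \<Rightarrow> 'i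
     \<Rightarrow> (('i \<Rightarrow> ('i,'a) strat) set \<Rightarrow> ('i \<Rightarrow> ('i,'a) strat) \<Rightarrow> real) \<Rightarrow> bool" where
  "cps G i \<mu> \<longleftrightarrow>
     (\<forall>E\<in>cond_events G i. (\<forall>s\<in>Sminus G i. \<mu> E s \<ge> 0) \<and> sum (\<mu> E) (Sminus G i) = 1 \<and>
                          sum (\<mu> E) E = 1) \<and>
     (\<forall>E\<in>cond_events G i. \<forall>E'\<in>cond_events G i. \<forall>A. A \<subseteq> E' \<longrightarrow> E' \<subseteq> E \<longrightarrow>
          sum (\<mu> E) A = sum (\<mu> E') A * sum (\<mu> E) E')"

definition seq_rational :: "('i,'a) game \<Rightarrow> 'i \<Rightarrow> ('i,'a) strat \<Rightarrow> bool" where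
  "seq_rational G i s \<longleftrightarrow> (\<exists>u\<in>utils G i. \<exists>\<mu>. cps G i \<mu> \<and>
     (\<forall>h\<in>Hi_of G i s. \<forall>t\<in>Si_h G i h.
        (\<Sum>sm\<in>Sminus G i. u (zeta G (sm(i := s))) * \<mu> (Sm_h G i h) sm)
      \<ge> (\<Sum>sm\<in>Sminus G i. u (zeta G (sm(i := t))) * \<mu> (Sm_h G i h) sm)))"

end

theory Submission
  imports Defs
begin

text \<open>
  If s is B-dominated at an information set h it allows, then whatever the belief at h, some
  strategy weakly dominating s on the support of that belief has strictly higher expected utility.

  Conversely, at each such h non-dominance provides a nonempty set Q of opponent profiles
  reaching h on which no strategy weakly dominates s. Take the utility \<open>-(1/K)^r\<close> of an
  outcome of rank r and the belief on Q with weights \<open>K^r\<close>, r the rank of the outcome of s: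
  then s earns -1 on every profile of Q, so -|Q| in total, while a single profile where t does
  strictly worse already costs t at least K \<ge> |Q|; otherwise t ties with s on all of Q.
  Listing these beliefs by the depth of their information sets gives a lexicographic belief,
  and conditioning on the first level that charges an event gives a CPS. The level that first
  charges the event of reaching h belongs to an information set h' weakly preceding h; splicing
  t into s from h onwards yields (by perfect recall) a strategy still reaching h', and the
  optimality of s at h' carries over to h.
\<close>

lemma sum_mult_less_on_support:
  fixes f g p :: "'b \<Rightarrow> real"
  assumes "finite A" "\<And>x. x \<in> A \<Longrightarrow> 0 \<le> p x" "\<And>x. x \<in> A \<Longrightarrow> 0 < p x \<Longrightarrow> f x \<le> g x"
    and "x0 \<in> A" "0 < p x0" "f x0 < g x0"
  shows "(\<Sum>x\<in>A. f x * p x) < (\<Sum>x\<in>A. g x * p x)"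
proof (rule sum_strict_mono_ex1[OF assms(1)])
  show "\<forall>x\<in>A. f x * p x \<le> g x * p x"
    using assms(2,3) by (metis less_eq_real_def mult_right_mono mult_zero_right)
  show "\<exists>x\<in>A. f x * p x < g x * p x" using assms(4-6) mult_strict_right_mono by blast
qed

lemma sum_power_ratio_ge_card:
  fixes rs rt :: "'q \<Rightarrow> nat" and K :: real
  assumes "finite Q" "K \<ge> 1" "K \<ge> real (card Q)"
    and "(\<exists>q\<in>Q. rt q < rs q) \<or> (\<forall>q\<in>Q. rt q = rs q)"
  shows "real (card Q) \<le> (\<Sum>q\<in>Q. (1/K) ^ rt q * K ^ rs q)"
  using assms(4)
proof
  assume "\<exists>q\<in>Q. rt q < rs q"
  then obtain q where q: "q \<in> Q" "rt q < rs q" by blast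
  have "(1/K) ^ rt q * K ^ rs q = K ^ (rs q - rt q)"
    using q(2) assms(2) by (simp add: power_diff power_one_over)
  also have "\<dots> \<ge> K" using power_increasing[of 1 "rs q - rt q" K] q(2) assms(2) by simp
  finally have "K \<le> (1/K) ^ rt q * K ^ rs q" .
  also have "\<dots> \<le> (\<Sum>q\<in>Q. (1/K) ^ rt q * K ^ rs q)"
    using assms(1,2) q(1) by (intro member_le_sum) auto
  finally show ?thesis using assms(3) by linarith
next
  assume "\<forall>q\<in>Q. rt q = rs q"
  then have "(\<Sum>q\<in>Q. (1/K) ^ rt q * K ^ rs q) = (\<Sum>q\<in>Q. 1)"
    using assms(2) by (intro sum.cong) (auto simp: power_one_over)
  then show ?thesis by simp
qed

subsection \<open>Conditional probability systems from lexicographic beliefs\<close>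

text \<open>Conditioning an event on the first weight function of a sequence that charges it: the
  standard passage from lexicographic probability systems to conditional probability systems.\<close>
definition lex_level :: "(nat \<Rightarrow> 'b \<Rightarrow> real) \<Rightarrow> 'b set \<Rightarrow> nat" where
  "lex_level \<rho> E = (LEAST k. 0 < sum (\<rho> k) E)"

definition lex_cond :: "(nat \<Rightarrow> 'b \<Rightarrow> real) \<Rightarrow> 'b set \<Rightarrow> 'b \<Rightarrow> real" where
  "lex_cond \<rho> E x = (if x \<in> E then \<rho> (lex_level \<rho> E) x / sum (\<rho> (lex_level \<rho> E)) E else 0)"

lemma lex_level_le: "0 < sum (\<rho> k) E \<Longrightarrow> lex_level \<rho> E \<le> k"
  unfolding lex_level_def by (rule Least_le)

lemma sum_lex_level_pos: "0 < sum (\<rho> k) E \<Longrightarrow> 0 < sum (\<rho> (lex_level \<rho> E)) E"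
  unfolding lex_level_def by (rule LeastI)

lemma lex_cond_nonneg: "(\<And>k x. 0 \<le> \<rho> k x) \<Longrightarrow> 0 \<le> lex_cond \<rho> E x"
  unfolding lex_cond_def by (simp add: sum_nonneg)

lemma sum_lex_cond:
  "A \<subseteq> E \<Longrightarrow> sum (lex_cond \<rho> E) A = sum (\<rho> (lex_level \<rho> E)) A / sum (\<rho> (lex_level \<rho> E)) E"
  unfolding lex_cond_def by (auto simp: sum_divide_distrib intro!: sum.cong)

lemma sum_mult_lex_cond:
  assumes "finite S" "E \<subseteq> S"
  shows "(\<Sum>x\<in>S. f x * lex_cond \<rho> E x) =
    (\<Sum>x\<in>E. f x * \<rho> (lex_level \<rho> E) x) / sum (\<rho> (lex_level \<rho> E)) E"
proof -
  have "(\<Sum>x\<in>S. f x * lex_cond \<rho> E x) = (\<Sum>x\<in>E. f x * lex_cond \<rho> E x)"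
    using assms by (intro sum.mono_neutral_cong_right) (auto simp: lex_cond_def)
  then show ?thesis by (simp add: lex_cond_def sum_divide_distrib)
qed

lemma sum_lex_cond_eq_1:
  assumes "finite S" "E \<subseteq> S" "0 < sum (\<rho> k) E"
  shows "sum (lex_cond \<rho> E) E = 1" "sum (lex_cond \<rho> E) S = 1"
proof -
  show E: "sum (lex_cond \<rho> E) E = 1"
    using sum_lex_cond[of E E \<rho>] sum_lex_level_pos[of \<rho> k E] assms(3) by simp
  have "sum (lex_cond \<rho> E) S = sum (lex_cond \<rho> E) E"
    using assms(1,2) by (intro sum.mono_neutral_cong_right) (auto simp: lex_cond_def)
  with E show "sum (lex_cond \<rho> E) S = 1" by simp
qed

lemma lex_cond_chain_rule:
  assumes nonneg: "\<And>k x. 0 \<le> \<rho> k x"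
    and "finite E" "A \<subseteq> E'" "E' \<subseteq> E" "0 < sum (\<rho> k') E'"
  shows "sum (lex_cond \<rho> E) A = sum (lex_cond \<rho> E') A * sum (lex_cond \<rho> E) E'"
proof -
  let ?k = "lex_level \<rho> E"
  have mono: "sum (\<rho> k) B \<le> sum (\<rho> k) C" if "B \<subseteq> C" "C \<subseteq> E" for k B C
    using that assms(2) nonneg by (intro sum_mono2) (auto intro: finite_subset)
  have "0 < sum (\<rho> k') E" using mono[OF assms(4) order.refl, of k'] assms(5) by linarith
  then have pos: "0 < sum (\<rho> ?k) E" using sum_lex_level_pos[of \<rho> k' E] by blast
  show ?thesis
  proof (cases "0 < sum (\<rho> ?k) E'")
    case True
    have "lex_level \<rho> E' \<le> ?k" using lex_level_le[of \<rho> ?k E'] True by blast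
    moreover have "0 < sum (\<rho> (lex_level \<rho> E')) E"
      using sum_lex_level_pos[of \<rho> k' E'] assms(5) mono[OF assms(4) order.refl] by (meson less_le_trans)
    then have "?k \<le> lex_level \<rho> E'" using lex_level_le[of \<rho> "lex_level \<rho> E'" E] by blast
    ultimately have level: "lex_level \<rho> E' = ?k" by simp
    have "sum (lex_cond \<rho> E) A = sum (\<rho> ?k) A / sum (\<rho> ?k) E"
      using sum_lex_cond[of A E \<rho>] assms(3,4) by auto
    moreover have "sum (lex_cond \<rho> E') A = sum (\<rho> ?k) A / sum (\<rho> ?k) E'"
      using sum_lex_cond[of A E' \<rho>] assms(3) level by auto
    moreover have "sum (lex_cond \<rho> E) E' = sum (\<rho> ?k) E' / sum (\<rho> ?k) E"
      using sum_lex_cond[of E' E \<rho>] assms(4) by auto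
    ultimately show ?thesis using True by simp
  next
    case False
    moreover have "0 \<le> sum (\<rho> ?k) E'" using nonneg by (simp add: sum_nonneg)
    ultimately have "sum (\<rho> ?k) E' = 0" by linarith
    moreover have "0 \<le> sum (\<rho> ?k) A" using nonneg by (simp add: sum_nonneg)
    ultimately have "sum (\<rho> ?k) A = 0" using mono[OF assms(3,4), of ?k] by linarith
    then show ?thesis
      using sum_lex_cond[of A E \<rho>] sum_lex_cond[of E' E \<rho>] \<open>sum (\<rho> ?k) E' = 0\<close> assms(3,4)
      by auto
  qed
qed

locale finite_game =
  fixes G :: "('i,'a) game"
  assumes wf: "wf_game G"
begin

lemma wf_game_parts:
  "finite (pl G)" "finite (hist G)" "[] \<in> hist G"
  "\<forall>x y. x @ y \<in> hist G \<longrightarrow> x \<in> hist G"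
  "\<forall>x. nonterm G x \<longrightarrow> (\<forall>j\<in>pl G. acts G j x \<noteq> {}) \<and>
      (\<forall>a. x @ [a] \<in> hist G \<longleftrightarrow> a \<in> (\<Pi>\<^sub>E j\<in>pl G. acts G j x))"
  "\<forall>j\<in>pl G. (\<forall>h\<in>info G j. h \<noteq> {}) \<and> \<Union>(info G j) = {x. active G j x} \<and>
      (\<forall>h\<in>info G j. \<forall>h'\<in>info G j. h \<noteq> h' \<longrightarrow> h \<inter> h' = {}) \<and>
      (\<forall>h\<in>info G j. \<forall>x\<in>h. \<forall>y\<in>h. acts G j x = acts G j y)"
  "perfect_recall G"
  "\<forall>j\<in>pl G. (\<forall>z\<in>Zs G. \<forall>z'\<in>Zs G. pref G j z z' \<or> pref G j z' z) \<and>
      (\<forall>z\<in>Zs G. \<forall>z'\<in>Zs G. \<forall>z''\<in>Zs G. pref G j z z' \<longrightarrow> pref G j z' z'' \<longrightarrow> pref G j z z'')"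
  using wf unfolding wf_game_def by - (elim conjE, assumption)+

lemmas finite_players = wf_game_parts(1)
  and finite_hist = wf_game_parts(2)
  and Nil_in_hist = wf_game_parts(3)

lemma hist_prefix_closed: "x @ y \<in> hist G \<Longrightarrow> x \<in> hist G"
  using wf_game_parts(4) by blast

lemma acts_nonempty: "nonterm G x \<Longrightarrow> j \<in> pl G \<Longrightarrow> acts G j x \<noteq> {}"
  using wf_game_parts(5) by blast

lemma snoc_in_hist_iff: "nonterm G x \<Longrightarrow> x @ [a] \<in> hist G \<longleftrightarrow> a \<in> (\<Pi>\<^sub>E j\<in>pl G. acts G j x)"
  using wf_game_parts(5)[rule_format, THEN conjunct2] by blast

lemma info_nonempty: "j \<in> pl G \<Longrightarrow> h \<in> info G j \<Longrightarrow> h \<noteq> {}"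
  using wf_game_parts(6)[rule_format, THEN conjunct1] by blast

lemma Union_info: "j \<in> pl G \<Longrightarrow> \<Union>(info G j) = {x. active G j x}"
  using wf_game_parts(6)[rule_format, THEN conjunct2, THEN conjunct1] .

lemma info_disjoint: "j \<in> pl G \<Longrightarrow> h \<in> info G j \<Longrightarrow> h' \<in> info G j \<Longrightarrow> h \<noteq> h' \<Longrightarrow> h \<inter> h' = {}"
  using wf_game_parts(6)[rule_format, THEN conjunct2, THEN conjunct2, THEN conjunct1] by blast

lemma info_acts_eq:
  "j \<in> pl G \<Longrightarrow> h \<in> info G j \<Longrightarrow> x \<in> h \<Longrightarrow> y \<in> h \<Longrightarrow> acts G j x = acts G j y"
  using wf_game_parts(6)[rule_format, THEN conjunct2, THEN conjunct2, THEN conjunct2] by blast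

lemma info_experience_eq:
  "j \<in> pl G \<Longrightarrow> h \<in> info G j \<Longrightarrow> x \<in> h \<Longrightarrow> y \<in> h \<Longrightarrow> experience G j x = experience G j y"
  using wf_game_parts(7) unfolding perfect_recall_def by blast

lemma pref_total: "j \<in> pl G \<Longrightarrow> z \<in> Zs G \<Longrightarrow> z' \<in> Zs G \<Longrightarrow> pref G j z z' \<or> pref G j z' z"
  using wf_game_parts(8)[rule_format, THEN conjunct1] by blast

lemma pref_trans:
  "\<lbrakk>j \<in> pl G; z \<in> Zs G; z' \<in> Zs G; z'' \<in> Zs G; pref G j z z'; pref G j z' z''\<rbrakk> \<Longrightarrow> pref G j z z''"
  using wf_game_parts(8)[rule_format, THEN conjunct2] by blast

lemma active_if_in_info: "j \<in> pl G \<Longrightarrow> h \<in> info G j \<Longrightarrow> x \<in> h \<Longrightarrow> active G j x"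
  using Union_info by (metis Union_iff mem_Collect_eq)

lemma active_nonterm: "active G j x \<Longrightarrow> nonterm G x"
  unfolding active_def by blast

lemma infoset_eqI:
  assumes "j \<in> pl G" "h \<in> info G j" "x \<in> h"
  shows "infoset G j x = h"
  unfolding infoset_def
proof (rule the_equality)
  fix h' assume "h' \<in> info G j \<and> x \<in> h'"
  then show "h' = h" using info_disjoint[OF assms(1,2)] assms(3) by blast
qed (use assms in blast)

lemma infoset_in_info:
  assumes "j \<in> pl G" "active G j x"
  shows "infoset G j x \<in> info G j" "x \<in> infoset G j x"
proof -
  have "x \<in> \<Union>(info G j)" using Union_info[OF assms(1)] assms(2) by simp
  then obtain h where "h \<in> info G j" "x \<in> h" by blast
  then show "infoset G j x \<in> info G j" "x \<in> infoset G j x" using infoset_eqI assms(1) by auto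
qed

lemma actsI_eq:
  assumes "j \<in> pl G" "h \<in> info G j" "x \<in> h"
  shows "actsI G j h = acts G j x"
  unfolding actsI_def using info_acts_eq[OF assms(1,2) _ assms(3)] someI[of "\<lambda>y. y \<in> h"] assms(3)
  by blast

lemma actsI_nonempty:
  assumes "j \<in> pl G" "h \<in> info G j"
  shows "actsI G j h \<noteq> {}"
proof -
  obtain x where x: "x \<in> h" using info_nonempty[OF assms] by blast
  show ?thesis
    using actsI_eq[OF assms x] acts_nonempty[OF active_nonterm[OF active_if_in_info[OF assms x]] assms(1)]
    by simp
qed

lemma the_inactive_action:
  assumes "j \<in> pl G" "nonterm G x" "\<not> active G j x" "a \<in> acts G j x"
  shows "(THE a. a \<in> acts G j x) = a"
  using assms unfolding active_def by (intro the_equality) auto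

lemma hist_step:
  assumes "x \<in> hist G" "k < length x"
  shows "take k x \<in> hist G" "nonterm G (take k x)" "x ! k \<in> (\<Pi>\<^sub>E j\<in>pl G. acts G j (take k x))"
proof -
  have "take (Suc k) x \<in> hist G"
    using hist_prefix_closed[of "take (Suc k) x" "drop (Suc k) x"] assms(1) by simp
  then have "take k x @ [x ! k] \<in> hist G"
    using assms(2) by (simp add: take_Suc_conv_app_nth)
  then show "take k x \<in> hist G" "nonterm G (take k x)"
    and "x ! k \<in> (\<Pi>\<^sub>E j\<in>pl G. acts G j (take k x))"
    using hist_prefix_closed snoc_in_hist_iff unfolding nonterm_def terminal_def by blast+
qed

subsection \<open>Plays and outcomes\<close>

definition std_profile :: "('i \<Rightarrow> ('i,'a) stdstrat) \<Rightarrow> bool" where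
  "std_profile \<sigma> \<longleftrightarrow> (\<forall>j\<in>pl G. \<sigma> j \<in> std_strat G j)"

lemma move_in_acts:
  assumes "std_profile \<sigma>" "nonterm G x"
  shows "move G \<sigma> x \<in> (\<Pi>\<^sub>E j\<in>pl G. acts G j x)"
proof -
  have "move G \<sigma> x j \<in> acts G j x" if j: "j \<in> pl G" for j
  proof (cases "active G j x")
    case True
    have "\<sigma> j (infoset G j x) \<in> actsI G j (infoset G j x)"
      using assms(1) j infoset_in_info[OF j True] unfolding std_profile_def std_strat_def by blast
    then show ?thesis
      using True j actsI_eq[OF j infoset_in_info[OF j True]] unfolding move_def by simp
  next
    case False
    obtain a where "a \<in> acts G j x" using acts_nonempty[OF assms(2) j] by blast
    then show ?thesis using False j the_inactive_action[OF j assms(2) False] unfolding move_def by simp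
  qed
  then show ?thesis unfolding move_def PiE_def extensional_def by auto
qed

lemma on_path_Nil: "on_path G \<sigma> []"
  unfolding on_path_def using Nil_in_hist by simp

lemma on_path_hist: "on_path G \<sigma> x \<Longrightarrow> x \<in> hist G"
  unfolding on_path_def by blast

lemma on_path_snoc:
  assumes "std_profile \<sigma>" "on_path G \<sigma> x" "nonterm G x"
  shows "on_path G \<sigma> (x @ [move G \<sigma> x])"
  using assms snoc_in_hist_iff[OF assms(3)] move_in_acts[OF assms(1,3)]
  unfolding on_path_def by (auto simp: nth_append less_Suc_eq)

lemma on_path_prefix:
  assumes "on_path G \<sigma> z" "prefix x z"
  shows "on_path G \<sigma> x"
proof -
  obtain w where w: "z = x @ w" using assms(2) prefixE by blast
  have "x ! k = move G \<sigma> (take k x)" if "k < length x" for k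
  proof -
    have "z ! k = move G \<sigma> (take k z)" using assms(1) that w unfolding on_path_def by auto
    then show ?thesis using that w by (simp add: nth_append)
  qed
  then show ?thesis
    using hist_prefix_closed on_path_hist[OF assms(1)] w unfolding on_path_def by blast
qed

lemma on_path_take_eq:
  assumes "on_path G \<sigma> z1" "on_path G \<sigma> z2" "k \<le> length z1" "k \<le> length z2"
  shows "take k z1 = take k z2"
  using assms(3,4)
proof (induction k)
  case (Suc k)
  then show ?case
    using assms(1,2) unfolding on_path_def by (simp add: take_Suc_conv_app_nth)
qed simp

lemma on_path_prefix_cases:
  assumes "on_path G \<sigma> z1" "on_path G \<sigma> z2"
  shows "prefix z1 z2 \<or> prefix z2 z1"
proof (cases "length z1 \<le> length z2")
  case True
  then have "take (length z1) z2 = z1" using on_path_take_eq[OF assms, of "length z1"] by simp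
  then show ?thesis by (metis take_is_prefix)
next
  case False
  then have "take (length z2) z1 = z2" using on_path_take_eq[OF assms, of "length z2"] by simp
  then show ?thesis by (metis take_is_prefix)
qed

lemma terminal_prefix_eq:
  assumes "terminal G z" "z' \<in> hist G" "prefix z z'"
  shows "z = z'"
proof (rule ccontr)
  assume "z \<noteq> z'"
  then obtain a w where "z' = z @ a # w" using assms(3) by (metis prefixE self_append_conv neq_Nil_conv)
  then show False using hist_prefix_closed[of "z @ [a]" w] assms(1,2) unfolding terminal_def by simp
qed

lemma on_path_terminal_unique:
  assumes "on_path G \<sigma> z" "terminal G z" "on_path G \<sigma> z'" "terminal G z'"
  shows "z = z'"
  using on_path_prefix_cases[OF assms(1,3)] terminal_prefix_eq assms on_path_hist by metis

lemma on_path_extends_to_terminal: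
  assumes "std_profile \<sigma>" "on_path G \<sigma> x"
  shows "\<exists>z. terminal G z \<and> on_path G \<sigma> z \<and> prefix x z"
proof -
  define N where "N = Max (length ` hist G)"
  have bound: "length y \<le> N" if "y \<in> hist G" for y
    unfolding N_def using finite_hist that by simp
  show ?thesis
    using assms(2)
  proof (induction "N - length x" arbitrary: x rule: less_induct)
    case less
    show ?case
    proof (cases "terminal G x")
      case True
      then show ?thesis using less.prems by auto
    next
      case False
      then have nt: "nonterm G x" using on_path_hist[OF less.prems] unfolding nonterm_def by blast
      let ?x = "x @ [move G \<sigma> x]"
      have path: "on_path G \<sigma> ?x" using on_path_snoc[OF assms(1) less.prems nt] .
      then have "N - length ?x < N - length x" using bound[OF on_path_hist[OF path]] by simp
      then obtain z where "terminal G z" "on_path G \<sigma> z" "prefix ?x z" using less.hyps path by blast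
      then show ?thesis by (meson prefix_order.dual_order.trans prefixI)
    qed
  qed
qed

lemma outcome_std_eqI:
  assumes "std_profile \<sigma>" "terminal G z" "on_path G \<sigma> z"
  shows "outcome_std G \<sigma> = z"
  unfolding outcome_std_def using assms on_path_terminal_unique by (intro the_equality) auto

lemma outcome_std:
  assumes "std_profile \<sigma>"
  shows "terminal G (outcome_std G \<sigma>)" "on_path G \<sigma> (outcome_std G \<sigma>)"
  using on_path_extends_to_terminal[OF assms on_path_Nil] outcome_std_eqI[OF assms] by auto

lemma prefix_outcome_std_iff:
  assumes "std_profile \<sigma>"
  shows "prefix x (outcome_std G \<sigma>) \<longleftrightarrow> on_path G \<sigma> x"
proof
  show "on_path G \<sigma> x" if "prefix x (outcome_std G \<sigma>)"
    using on_path_prefix outcome_std[OF assms] that by blast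
  show "prefix x (outcome_std G \<sigma>)" if x: "on_path G \<sigma> x"
    using on_path_prefix_cases[OF x outcome_std(2)[OF assms]]
      terminal_prefix_eq[OF outcome_std(1)[OF assms] on_path_hist[OF x]] by auto
qed

lemma on_path_transfer:
  assumes "on_path G \<sigma> x"
    and "\<And>j k. j \<in> pl G \<Longrightarrow> k < length x \<Longrightarrow> active G j (take k x) \<Longrightarrow>
           \<tau> j (infoset G j (take k x)) = \<sigma> j (infoset G j (take k x))"
  shows "on_path G \<tau> x"
proof -
  have "move G \<tau> (take k x) = move G \<sigma> (take k x)" if "k < length x" for k
    using assms(2)[OF _ that] unfolding move_def by auto
  then show ?thesis using assms(1) unfolding on_path_def by auto
qed

subsection \<open>Strategies as classes of behaviourally equivalent standard strategies\<close>

definition beq_rel :: "'i \<Rightarrow> (('i,'a) stdstrat \<times> ('i,'a) stdstrat) set" where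
  "beq_rel j = {(\<sigma>, \<tau>). \<sigma> \<in> std_strat G j \<and> \<tau> \<in> std_strat G j \<and> beq G j \<sigma> \<tau>}"

lemma Strat_eq_quotient: "Strat G j = std_strat G j // beq_rel j"
  unfolding Strat_def beq_rel_def by simp

lemma equiv_beq_rel: "equiv (std_strat G j) (beq_rel j)"
proof (rule equivI)
  show "refl_on (std_strat G j) (beq_rel j)" unfolding refl_on_def beq_rel_def beq_def by auto
  show "sym (beq_rel j)" unfolding sym_def beq_rel_def beq_def by auto
  show "trans (beq_rel j)" unfolding trans_def beq_rel_def beq_def by (auto; metis)
  show "beq_rel j \<subseteq> std_strat G j \<times> std_strat G j" unfolding beq_rel_def by auto
qed

lemma Strat_class_nonempty: "p \<in> Strat G j \<Longrightarrow> \<exists>\<sigma>. \<sigma> \<in> p"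
  using in_quotient_imp_non_empty[OF equiv_beq_rel] Strat_eq_quotient by blast

lemma Strat_subset: "p \<in> Strat G j \<Longrightarrow> p \<subseteq> std_strat G j"
  using in_quotient_imp_subset[OF equiv_beq_rel] Strat_eq_quotient by metis

lemma Strat_beq: "p \<in> Strat G j \<Longrightarrow> \<sigma> \<in> p \<Longrightarrow> \<tau> \<in> p \<Longrightarrow> beq G j \<sigma> \<tau>"
  using in_quotient_imp_in_rel[OF equiv_beq_rel, of p j \<sigma> \<tau>] Strat_eq_quotient
  unfolding beq_rel_def by auto

lemma class_in_Strat: "\<sigma> \<in> std_strat G j \<Longrightarrow> beq_rel j `` {\<sigma>} \<in> Strat G j"
  using quotientI Strat_eq_quotient by metis

lemma in_own_class: "\<sigma> \<in> std_strat G j \<Longrightarrow> \<sigma> \<in> beq_rel j `` {\<sigma>}"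
  using equiv_class_self[OF equiv_beq_rel] by metis

definition profile :: "('i \<Rightarrow> ('i,'a) strat) \<Rightarrow> bool" where
  "profile p \<longleftrightarrow> (\<forall>j\<in>pl G. p j \<in> Strat G j)"

definition represents :: "('i \<Rightarrow> ('i,'a) stdstrat) \<Rightarrow> ('i \<Rightarrow> ('i,'a) strat) \<Rightarrow> bool" where
  "represents \<sigma> p \<longleftrightarrow> profile p \<and> (\<forall>j\<in>pl G. \<sigma> j \<in> p j)"

lemma represents_std_profile: "represents \<sigma> p \<Longrightarrow> std_profile \<sigma>"
  unfolding represents_def profile_def std_profile_def using Strat_subset by blast

lemma represents_chosen: "profile p \<Longrightarrow> represents (\<lambda>j. SOME \<sigma>. \<sigma> \<in> p j) p"
  unfolding represents_def profile_def using Strat_class_nonempty someI_ex by metis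

lemma profile_upd: "sm \<in> Sminus G i \<Longrightarrow> x \<in> Strat G i \<Longrightarrow> profile (sm(i := x))"
  unfolding profile_def Sminus_def by auto

lemma represents_upd:
  "represents \<sigma> (sm(i := x)) \<Longrightarrow> y \<in> Strat G i \<Longrightarrow> \<tau> \<in> y \<Longrightarrow> represents (\<sigma>(i := \<tau>)) (sm(i := y))"
  unfolding represents_def profile_def by auto

lemma represents_exists:
  assumes "sm \<in> Sminus G i" "x \<in> Strat G i" "\<sigma> \<in> x"
  obtains \<rho> where "represents \<rho> (sm(i := x))" "\<rho> i = \<sigma>"
  using represents_upd[OF represents_chosen[OF profile_upd[OF assms(1,2)]] assms(2,3)] by fastforce

lemma allows_if_on_path:
  assumes "std_profile \<tau>" "j \<in> pl G" "h \<in> info G j" "x \<in> h" "on_path G \<tau> x"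
  shows "allows G j (\<tau> j) h"
  unfolding allows_def using assms prefix_outcome_std_iff[OF assms(1)] unfolding std_profile_def by blast

text \<open>Behaviourally equivalent standard strategies agree at every information set the play
  visits, so the choice of representatives does not matter.\<close>
lemma zeta_eq_outcome_std:
  assumes "represents \<sigma> p"
  shows "zeta G p = outcome_std G \<sigma>"
proof -
  let ?\<tau> = "\<lambda>j. SOME \<sigma>. \<sigma> \<in> p j"
  have rep: "represents ?\<tau> p" using represents_chosen assms unfolding represents_def by blast
  have std: "std_profile ?\<tau>" "std_profile \<sigma>" using rep assms by (auto intro: represents_std_profile)
  let ?z = "outcome_std G ?\<tau>"
  have "on_path G \<sigma> ?z"
  proof (rule on_path_transfer[OF outcome_std(2)[OF std(1)]])
    fix j k assume j: "j \<in> pl G" and k: "k < length ?z" and a: "active G j (take k ?z)"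
    let ?g = "infoset G j (take k ?z)"
    have g: "?g \<in> info G j" "take k ?z \<in> ?g" using infoset_in_info[OF j a] by auto
    have "on_path G ?\<tau> (take k ?z)"
      using on_path_prefix[OF outcome_std(2)[OF std(1)] take_is_prefix] .
    then have "allows G j (?\<tau> j) ?g" using allows_if_on_path[OF std(1) j g] by blast
    moreover have "beq G j (\<sigma> j) (?\<tau> j)"
      using Strat_beq rep assms j unfolding represents_def profile_def by blast
    ultimately show "\<sigma> j ?g = ?\<tau> j ?g" using g(1) unfolding beq_def by blast
  qed
  then show ?thesis
    unfolding zeta_def using outcome_std_eqI[OF std(2) outcome_std(1)[OF std(1)]] by simp
qed

lemma zeta_terminal: "profile p \<Longrightarrow> terminal G (zeta G p)"
  using zeta_eq_outcome_std[OF represents_chosen] outcome_std(1)[OF represents_std_profile[OF represents_chosen]]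
  by simp

lemma zeta_upd_in_Zs: "sm \<in> Sminus G i \<Longrightarrow> x \<in> Strat G i \<Longrightarrow> zeta G (sm(i := x)) \<in> Zs G"
  using zeta_terminal[OF profile_upd] unfolding Zs_def by blast

lemma reaches_iff_on_path:
  assumes "represents \<sigma> p"
  shows "reaches G p h \<longleftrightarrow> (\<exists>x\<in>h. on_path G \<sigma> x)"
  unfolding reaches_def zeta_eq_outcome_std[OF assms]
  using prefix_outcome_std_iff[OF represents_std_profile[OF assms]] by blast

lemma Si_h_subset: "Si_h G i h \<subseteq> Strat G i"
  unfolding Si_h_def by blast

lemma Sm_h_subset: "Sm_h G i h \<subseteq> Sminus G i"
  unfolding Sm_h_def by blast

lemma finite_acts:
  assumes "nonterm G x" "j \<in> pl G"
  shows "finite (acts G j x)"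
proof -
  have fin: "finite {a. x @ [a] \<in> hist G}"
    using finite_vimageI[OF finite_hist, of "\<lambda>a. x @ [a]"] by (simp add: inj_on_def vimage_def)
  have "acts G j x \<subseteq> (\<lambda>a. a j) ` {a. x @ [a] \<in> hist G}"
  proof
    fix b assume b: "b \<in> acts G j x"
    let ?a = "\<lambda>k. if k \<in> pl G then (if k = j then b else SOME c. c \<in> acts G k x) else undefined"
    have "(SOME c. c \<in> acts G k x) \<in> acts G k x" if "k \<in> pl G" for k
      using acts_nonempty[OF assms(1) that] some_in_eq by blast
    then have "?a \<in> (\<Pi>\<^sub>E k\<in>pl G. acts G k x)" using b by (auto simp: PiE_def extensional_def)
    then have "x @ [?a] \<in> hist G" using snoc_in_hist_iff[OF assms(1)] by blast
    then show "b \<in> (\<lambda>a. a j) ` {a. x @ [a] \<in> hist G}" using assms(2) by (intro image_eqI[of _ _ ?a]) auto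
  qed
  then show ?thesis using fin finite_subset by blast
qed

lemma finite_info:
  assumes "j \<in> pl G"
  shows "finite (info G j)"
proof -
  have "info G j \<subseteq> Pow (hist G)" using Union_info[OF assms] unfolding active_def nonterm_def by blast
  then show ?thesis using finite_hist finite_subset by blast
qed

lemma finite_std_strat:
  assumes "j \<in> pl G"
  shows "finite (std_strat G j)"
proof -
  have "std_strat G j = (\<Pi>\<^sub>E h\<in>info G j. actsI G j h)"
    unfolding std_strat_def PiE_def Pi_def extensional_def by auto
  moreover have "finite (actsI G j h)" if h: "h \<in> info G j" for h
  proof -
    obtain x where x: "x \<in> h" using info_nonempty[OF assms h] by blast
    show ?thesis using actsI_eq[OF assms h x]
        finite_acts[OF active_nonterm[OF active_if_in_info[OF assms h x]] assms] by simp
  qed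
  ultimately show ?thesis using finite_info[OF assms] by (simp add: finite_PiE)
qed

lemma finite_Strat: "j \<in> pl G \<Longrightarrow> finite (Strat G j)"
  unfolding Strat_eq_quotient quotient_def using finite_std_strat by auto

lemma finite_Sminus: "finite (Sminus G i)"
  unfolding Sminus_def using finite_Strat finite_players by (intro finite_PiE) auto

lemma finite_Zs: "finite (Zs G)"
  using finite_hist unfolding Zs_def terminal_def by (auto intro: finite_subset)

subsection \<open>Perfect recall\<close>

definition experience_step :: "'i \<Rightarrow> ('i,'a) hist \<Rightarrow> nat \<Rightarrow> (('i,'a) iset \<times> 'a) list" where
  "experience_step j y k =
     (if active G j (take k y) then [(infoset G j (take k y), (y ! k) j)] else [])"

lemma experience_conv: "experience G j x = concat (map (experience_step j x) [0..<length x])"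
  unfolding experience_def experience_step_def by simp

lemma mem_experience_iff:
  "(g, a) \<in> set (experience G j x) \<longleftrightarrow>
     (\<exists>k<length x. active G j (take k x) \<and> g = infoset G j (take k x) \<and> a = (x ! k) j)"
  unfolding experience_conv experience_step_def by (auto split: if_splits)

lemma length_experience_less:
  assumes "strict_prefix x y" "active G j x"
  shows "length (experience G j x) < length (experience G j y)"
proof -
  obtain w where w: "y = x @ w" "w \<noteq> []"
    using assms(1) by (metis prefixE strict_prefix_def self_append_conv)
  have "[0..<length y] = [0..<length x] @ [length x..<length y]"
    using w by (simp add: upt_add_eq_append[of 0 "length x"])
  also have "[length x..<length y] = length x # [Suc (length x)..<length y]"
    using w by (simp add: upt_conv_Cons)
  finally have upt_split: "[0..<length y] = [0..<length x] @ length x # [Suc (length x)..<length y]" .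
  have before: "map (experience_step j y) [0..<length x] = map (experience_step j x) [0..<length x]"
    using w by (auto simp: experience_step_def nth_append)
  have "experience_step j y (length x) = [(infoset G j x, (y ! length x) j)]"
    using w assms(2) by (simp add: experience_step_def)
  then show ?thesis unfolding experience_conv upt_split by (simp add: before)
qed

lemma info_not_strict_prefix:
  assumes "j \<in> pl G" "g \<in> info G j" "x \<in> g" "y \<in> g"
  shows "\<not> strict_prefix x y"
proof
  assume "strict_prefix x y"
  then show False
    using length_experience_less active_if_in_info[OF assms(1-3)] info_experience_eq[OF assms] by fastforce
qed

lemma strict_prefix_take_take:
  assumes "m < n" "n \<le> length x"
  shows "strict_prefix (take m x) (take n x)"
proof -
  have "prefix (take m x) (take n x)" using take_is_prefix[of m "take n x"] assms(1) by (simp add: min_absorb1)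
  moreover have "take m x \<noteq> take n x"
    using assms by (metis length_take min.absorb4 min_absorb2 nat_neq_iff order.strict_trans2)
  ultimately show ?thesis unfolding strict_prefix_def by blast
qed

lemma info_visited_once:
  assumes "j \<in> pl G" "k < length x" "k' < length x"
    "active G j (take k x)" "active G j (take k' x)"
    "infoset G j (take k x) = infoset G j (take k' x)"
  shows "k = k'"
proof (rule ccontr)
  assume "k \<noteq> k'"
  then have "strict_prefix (take k x) (take k' x) \<or> strict_prefix (take k' x) (take k x)"
    using assms(2,3) strict_prefix_take_take by (meson linorder_neqE_nat less_imp_le)
  moreover have "take k x \<in> infoset G j (take k x)" "take k' x \<in> infoset G j (take k x)"
    using infoset_in_info[OF assms(1,4)] infoset_in_info[OF assms(1,5)] assms(6) by auto
  ultimately show False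
    using info_not_strict_prefix[OF assms(1) infoset_in_info(1)[OF assms(1,4)]] by blast
qed

lemma perfect_recall_same_choice:
  assumes "j \<in> pl G" "h \<in> info G j" "x \<in> h" "y \<in> h"
    "on_path G \<sigma> x" "on_path G \<tau> y" "k < length x" "active G j (take k x)"
  shows "\<sigma> j (infoset G j (take k x)) = \<tau> j (infoset G j (take k x))"
proof -
  have "(infoset G j (take k x), (x ! k) j) \<in> set (experience G j x)"
    unfolding mem_experience_iff using assms(7,8) by blast
  then have "(infoset G j (take k x), (x ! k) j) \<in> set (experience G j y)"
    using info_experience_eq[OF assms(1-4)] by simp
  then obtain k' where k': "k' < length y" "active G j (take k' y)"
    "infoset G j (take k x) = infoset G j (take k' y)" "(x ! k) j = (y ! k') j"
    unfolding mem_experience_iff by blast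
  have "(x ! k) j = \<sigma> j (infoset G j (take k x))"
    using assms(1,5,7,8) unfolding on_path_def move_def by simp
  moreover have "(y ! k') j = \<tau> j (infoset G j (take k' y))"
    using assms(1,6) k'(1,2) unfolding on_path_def move_def by simp
  ultimately show ?thesis using k'(3,4) by simp
qed

definition precedes :: "'i \<Rightarrow> ('i,'a) iset \<Rightarrow> ('i,'a) iset \<Rightarrow> bool" where
  "precedes j g h \<longleftrightarrow> g \<in> info G j \<and> h \<in> info G j \<and> (\<exists>x\<in>g. \<exists>y\<in>h. strict_prefix x y)"

text \<open>By perfect recall, if some history of h passes through g, then all of them do.\<close>
lemma precedes_strict_prefix:
  assumes "j \<in> pl G" "precedes j g h" "y \<in> h"
  shows "\<exists>x\<in>g. strict_prefix x y"
proof -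
  obtain x x' where x: "g \<in> info G j" "h \<in> info G j" "x \<in> g" "x' \<in> h" "strict_prefix x x'"
    using assms(2) unfolding precedes_def by blast
  obtain w where w: "x' = x @ w" "w \<noteq> []"
    using x(5) by (metis prefixE strict_prefix_def self_append_conv)
  have "(g, (x' ! length x) j) \<in> set (experience G j x')"
    unfolding mem_experience_iff using w active_if_in_info[OF assms(1) x(1,3)]
      infoset_eqI[OF assms(1) x(1,3)] by (intro exI[of _ "length x"]) simp
  then have "(g, (x' ! length x) j) \<in> set (experience G j y)"
    using info_experience_eq[OF assms(1) x(2,4) assms(3)] by simp
  then obtain k where k: "k < length y" "active G j (take k y)" "g = infoset G j (take k y)"
    unfolding mem_experience_iff by blast
  have "take k y \<in> g" using infoset_in_info[OF assms(1) k(2)] k(3) by simp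
  moreover have "strict_prefix (take k y) y"
    using k(1) by (metis prefix_order.le_neq_trans take_is_prefix length_take min_absorb2 nat_less_le)
  ultimately show ?thesis by blast
qed

definition depth :: "'i \<Rightarrow> ('i,'a) iset \<Rightarrow> nat" where
  "depth j g = length (experience G j (SOME x. x \<in> g))"

lemma depth_eq:
  assumes "j \<in> pl G" "g \<in> info G j" "x \<in> g"
  shows "depth j g = length (experience G j x)"
  unfolding depth_def using info_experience_eq[OF assms(1,2) someI[of "\<lambda>x. x \<in> g", OF assms(3)] assms(3)]
  by simp

lemma depth_less_if_precedes:
  assumes "j \<in> pl G" "precedes j g h"
  shows "depth j g < depth j h"
proof -
  obtain x y where xy: "g \<in> info G j" "h \<in> info G j" "x \<in> g" "y \<in> h" "strict_prefix x y"
    using assms(2) unfolding precedes_def by blast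
  show ?thesis
    using depth_eq[OF assms(1) xy(1,3)] depth_eq[OF assms(1) xy(2,4)]
      length_experience_less[OF xy(5) active_if_in_info[OF assms(1) xy(1,3)]] by simp
qed

lemma info_cases_on_common_path:
  assumes "j \<in> pl G" "g \<in> info G j" "h \<in> info G j" "x \<in> g" "y \<in> h" "prefix x z" "prefix y z"
  shows "g = h \<or> precedes j g h \<or> precedes j h g"
proof -
  have "prefix x y \<or> prefix y x" using assms(6,7) prefix_same_cases by blast
  moreover have "x = y \<Longrightarrow> g = h" using info_disjoint[OF assms(1,2,3)] assms(4,5) by blast
  ultimately show ?thesis using assms(2-5) unfolding precedes_def by (metis prefix_order.le_neq_trans)
qed

lemma on_path_swap_own_choices:
  assumes "i \<in> pl G" "h \<in> info G i" "x \<in> h" "y \<in> h" "on_path G \<sigma> x" "on_path G \<tau> y"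
  shows "on_path G (\<tau>(i := \<sigma> i)) y"
  using assms(6)
proof (rule on_path_transfer)
  fix j k assume "j \<in> pl G" "k < length y" "active G j (take k y)"
  then show "(\<tau>(i := \<sigma> i)) j (infoset G j (take k y)) = \<tau> j (infoset G j (take k y))"
    using perfect_recall_same_choice[OF assms(1,2,4,3,6,5)] by (cases "j = i") auto
qed

text \<open>Each player chooses, at every own information set the history crosses, the action the
  history takes there; by perfect recall each such information set is crossed only once.\<close>
definition history_strat :: "('i,'a) hist \<Rightarrow> 'i \<Rightarrow> ('i,'a) stdstrat" where
  "history_strat x j g =
     (let visit = \<lambda>k. k < length x \<and> active G j (take k x) \<and> infoset G j (take k x) = g in
      if g \<notin> info G j then undefined
      else if \<exists>k. visit k then (x ! (SOME k. visit k)) j else SOME a. a \<in> actsI G j g)"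

lemma history_strat_visit:
  assumes "j \<in> pl G" "k < length x" "active G j (take k x)"
  shows "history_strat x j (infoset G j (take k x)) = (x ! k) j"
proof -
  let ?g = "infoset G j (take k x)"
  let ?visit = "\<lambda>k. k < length x \<and> active G j (take k x) \<and> infoset G j (take k x) = ?g"
  have "(SOME k'. ?visit k') = k"
  proof (rule some_equality)
    fix k' assume "?visit k'"
    then show "k' = k" using info_visited_once[OF assms(1), of k' x k] assms(2,3) by auto
  qed (use assms in simp)
  moreover have "?g \<in> info G j" using infoset_in_info[OF assms(1,3)] by blast
  ultimately show ?thesis using assms(2,3) unfolding history_strat_def Let_def by auto
qed

lemma history_strat_std_profile:
  assumes "x \<in> hist G"
  shows "std_profile (history_strat x)"
proof -
  have "history_strat x j g \<in> actsI G j g" if j: "j \<in> pl G" and g: "g \<in> info G j" for j g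
  proof (cases "\<exists>k<length x. active G j (take k x) \<and> infoset G j (take k x) = g")
    case True
    then obtain k where k: "k < length x" "active G j (take k x)" and gk: "g = infoset G j (take k x)"
      by blast
    have "(x ! k) j \<in> acts G j (take k x)" using hist_step(3)[OF assms k(1)] j by auto
    moreover have "actsI G j g = acts G j (take k x)"
      using actsI_eq[OF j g] infoset_in_info(2)[OF j k(2)] gk by simp
    ultimately show ?thesis using history_strat_visit[OF j k] gk by simp
  next
    case False
    then show ?thesis
      using g actsI_nonempty[OF j g] unfolding history_strat_def Let_def by (auto simp: some_in_eq)
  qed
  moreover have "history_strat x j g = undefined" if "g \<notin> info G j" for j g
    using that unfolding history_strat_def by simp
  ultimately show ?thesis unfolding std_profile_def std_strat_def by blast
qed

lemma on_path_history_strat: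
  assumes "x \<in> hist G"
  shows "on_path G (history_strat x) x"
proof -
  have "(x ! k) j = move G (history_strat x) (take k x) j" if k: "k < length x" for k j
  proof -
    have xk: "x ! k \<in> (\<Pi>\<^sub>E j\<in>pl G. acts G j (take k x))" using hist_step(3)[OF assms k] .
    consider "j \<notin> pl G" | "j \<in> pl G" "active G j (take k x)" | "j \<in> pl G" "\<not> active G j (take k x)"
      by blast
    then show ?thesis
    proof cases
      case 1
      then show ?thesis using xk unfolding move_def by auto
    next
      case 2
      then show ?thesis using history_strat_visit[OF _ k] unfolding move_def by simp
    next
      case 3
      have "(x ! k) j \<in> acts G j (take k x)" using xk 3(1) by auto
      then show ?thesis
        using the_inactive_action[OF 3(1) hist_step(2)[OF assms k] 3(2)] 3 unfolding move_def by simp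
    qed
  qed
  then show ?thesis using assms unfolding on_path_def by auto
qed

lemma reaches_swap:
  assumes "i \<in> pl G" "h \<in> info G i"
    and "sm1 \<in> Sminus G i" "sm2 \<in> Sminus G i" "s1 \<in> Strat G i" "s2 \<in> Strat G i"
    and "reaches G (sm1(i := s1)) h" "reaches G (sm2(i := s2)) h"
  shows "reaches G (sm2(i := s1)) h"
proof -
  obtain \<rho>1 where \<rho>1: "represents \<rho>1 (sm1(i := s1))"
    using represents_exists[OF assms(3,5)] Strat_class_nonempty[OF assms(5)] by metis
  obtain \<rho>2 where \<rho>2: "represents \<rho>2 (sm2(i := s2))"
    using represents_exists[OF assms(4,6)] Strat_class_nonempty[OF assms(6)] by metis
  obtain x where x: "x \<in> h" "on_path G \<rho>1 x" using assms(7) reaches_iff_on_path[OF \<rho>1] by blast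
  obtain y where y: "y \<in> h" "on_path G \<rho>2 y" using assms(8) reaches_iff_on_path[OF \<rho>2] by blast
  have "\<rho>1 i \<in> s1" using \<rho>1 assms(1) unfolding represents_def by auto
  then have "represents (\<rho>2(i := \<rho>1 i)) (sm2(i := s1))" using represents_upd[OF \<rho>2 assms(5)] by blast
  then show ?thesis
    using reaches_iff_on_path on_path_swap_own_choices[OF assms(1,2) x(1) y(1) x(2) y(2)] y(1) by blast
qed

lemma reaches_Si_h_Sm_h:
  assumes "i \<in> pl G" "h \<in> info G i" "s \<in> Si_h G i h" "sm \<in> Sm_h G i h"
  shows "reaches G (sm(i := s)) h"
proof -
  obtain sm1 where "sm1 \<in> Sminus G i" "reaches G (sm1(i := s)) h"
    using assms(3) unfolding Si_h_def by blast
  moreover obtain s2 where "s2 \<in> Strat G i" "reaches G (sm(i := s2)) h"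
    using assms(4) unfolding Sm_h_def by blast
  ultimately show ?thesis
    using reaches_swap[OF assms(1,2)] assms(3,4) Sm_h_subset Si_h_subset by blast
qed

lemma reaches_if_precedes:
  assumes "i \<in> pl G" "precedes i g h" "reaches G p h"
  shows "reaches G p g"
proof -
  obtain y where y: "y \<in> h" "prefix y (zeta G p)" using assms(3) unfolding reaches_def by blast
  obtain x where "x \<in> g" "strict_prefix x y" using precedes_strict_prefix[OF assms(1,2) y(1)] by blast
  then show ?thesis
    using y(2) unfolding reaches_def by (meson prefix_order.dual_order.trans prefix_order.less_imp_le)
qed

lemma Hi_of_comparable:
  assumes "i \<in> pl G" "h \<in> Hi_of G i s" "h' \<in> Hi_of G i s" "sm \<in> Sm_h G i h" "sm \<in> Sm_h G i h'"
  shows "h = h' \<or> precedes i h h' \<or> precedes i h' h"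
proof -
  have h: "h \<in> info G i" "s \<in> Si_h G i h" and h': "h' \<in> info G i" "s \<in> Si_h G i h'"
    using assms(2,3) unfolding Hi_of_def by auto
  obtain x where "x \<in> h" "prefix x (zeta G (sm(i := s)))"
    using reaches_Si_h_Sm_h[OF assms(1) h assms(4)] unfolding reaches_def by blast
  moreover obtain y where "y \<in> h'" "prefix y (zeta G (sm(i := s)))"
    using reaches_Si_h_Sm_h[OF assms(1) h' assms(5)] unfolding reaches_def by blast
  ultimately show ?thesis using info_cases_on_common_path[OF assms(1) h(1) h'(1)] by blast
qed

lemma Sm_h_nonempty:
  assumes "i \<in> pl G" "h \<in> info G i"
  shows "Sm_h G i h \<noteq> {}"
proof -
  obtain x where x: "x \<in> h" using info_nonempty[OF assms] by blast
  have "x \<in> hist G" using active_if_in_info[OF assms x] unfolding active_def nonterm_def by blast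
  define \<sigma> where "\<sigma> = history_strat x"
  have \<sigma>: "std_profile \<sigma>" "on_path G \<sigma> x"
    unfolding \<sigma>_def using history_strat_std_profile on_path_history_strat \<open>x \<in> hist G\<close> by auto
  define sm where "sm = (\<lambda>j. if j \<in> pl G - {i} then beq_rel j `` {\<sigma> j} else undefined)"
  define s where "s = beq_rel i `` {\<sigma> i}"
  have classes: "beq_rel j `` {\<sigma> j} \<in> Strat G j" if "j \<in> pl G" for j
    using \<sigma>(1) class_in_Strat that unfolding std_profile_def by blast
  then have sm: "sm \<in> Sminus G i" and s: "s \<in> Strat G i"
    using assms(1) unfolding sm_def s_def Sminus_def by (auto simp: PiE_iff extensional_def)
  have "represents \<sigma> (sm(i := s))"
    using profile_upd[OF sm s] \<sigma>(1) in_own_class unfolding represents_def sm_def s_def std_profile_def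
    by auto
  then have "reaches G (sm(i := s)) h" using reaches_iff_on_path x \<sigma>(2) by blast
  then show ?thesis unfolding Sm_h_def using sm s by blast
qed

subsection \<open>Splicing strategies\<close>

definition splice_strat :: "('i,'a) iset \<Rightarrow> ('i,'a) stdstrat \<Rightarrow> ('i,'a) stdstrat \<Rightarrow> ('i,'a) stdstrat" where
  "splice_strat h \<sigma>t \<sigma>s g = (if \<exists>y\<in>g. \<exists>x\<in>h. prefix x y then \<sigma>t g else \<sigma>s g)"

lemma splice_strat_std_strat:
  "\<sigma>t \<in> std_strat G i \<Longrightarrow> \<sigma>s \<in> std_strat G i \<Longrightarrow> splice_strat h \<sigma>t \<sigma>s \<in> std_strat G i"
  unfolding std_strat_def splice_strat_def by auto

lemma std_profile_upd: "std_profile \<rho> \<Longrightarrow> \<sigma> \<in> std_strat G i \<Longrightarrow> std_profile (\<rho>(i := \<sigma>))"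
  unfolding std_profile_def by auto

text \<open>Before h the spliced strategy follows \<open>\<tau> i\<close>, which by perfect recall agrees with
  \<open>\<rho> i\<close> on the way to h.\<close>
lemma outcome_splice_reaching:
  assumes "i \<in> pl G" "h \<in> info G i" "std_profile \<rho>" "std_profile \<tau>"
    and "x \<in> h" "prefix x (outcome_std G \<rho>)" "xs \<in> h" "on_path G \<tau> xs"
  shows "outcome_std G (\<rho>(i := splice_strat h (\<rho> i) (\<tau> i))) = outcome_std G \<rho>"
proof -
  let ?z = "outcome_std G \<rho>"
  have z: "terminal G ?z" "on_path G \<rho> ?z" using outcome_std[OF assms(3)] by auto
  have x: "on_path G \<rho> x" using on_path_prefix[OF z(2) assms(6)] .
  have "on_path G (\<rho>(i := splice_strat h (\<rho> i) (\<tau> i))) ?z"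
  proof (rule on_path_transfer[OF z(2)])
    fix j k assume j: "j \<in> pl G" and k: "k < length ?z" and a: "active G j (take k ?z)"
    let ?g = "infoset G i (take k ?z)"
    show "(\<rho>(i := splice_strat h (\<rho> i) (\<tau> i))) j (infoset G j (take k ?z)) = \<rho> j (infoset G j (take k ?z))"
    proof (cases "j = i \<and> \<not> (\<exists>y\<in>?g. \<exists>x\<in>h. prefix x y)")
      case True
      then have "\<not> prefix x (take k ?z)" using infoset_in_info(2)[OF assms(1)] a assms(5) by blast
      obtain w where w: "?z = x @ w" using assms(6) prefixE by blast
      have "k < length x"
      proof (rule ccontr)
        assume "\<not> k < length x"
        then have "take k ?z = x @ take (k - length x) w" using w by simp
        then show False using \<open>\<not> prefix x (take k ?z)\<close> by simp
      qed
      moreover have "take k x = take k ?z" using calculation w by simp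
      ultimately have "\<rho> i ?g = \<tau> i ?g"
        using perfect_recall_same_choice[OF assms(1,2,5,7) x assms(8)] True a by metis
      then show ?thesis using True unfolding splice_strat_def by simp
    qed (auto simp: splice_strat_def)
  qed
  then show ?thesis
    using outcome_std_eqI[OF std_profile_upd[OF assms(3)] z(1)] splice_strat_std_strat assms(1,3,4)
    unfolding std_profile_def by blast
qed

text \<open>The spliced strategy departs from \<open>\<rho> i\<close> only from h onwards, which the play avoids.\<close>
lemma outcome_splice_avoiding:
  assumes "i \<in> pl G" "h \<in> info G i" "std_profile \<rho>" "\<sigma>t \<in> std_strat G i"
    and "\<not> (\<exists>x\<in>h. prefix x (outcome_std G \<rho>))"
  shows "outcome_std G (\<rho>(i := splice_strat h \<sigma>t (\<rho> i))) = outcome_std G \<rho>"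
proof -
  let ?z = "outcome_std G \<rho>"
  have z: "terminal G ?z" "on_path G \<rho> ?z" using outcome_std[OF assms(3)] by auto
  have "on_path G (\<rho>(i := splice_strat h \<sigma>t (\<rho> i))) ?z"
  proof (rule on_path_transfer[OF z(2)])
    fix j k assume j: "j \<in> pl G" and k: "k < length ?z" and a: "active G j (take k ?z)"
    let ?g = "infoset G i (take k ?z)"
    have "\<not> (\<exists>y\<in>?g. \<exists>x\<in>h. prefix x y)" if "j = i"
    proof
      assume "\<exists>y\<in>?g. \<exists>x\<in>h. prefix x y"
      then obtain y x0 where yx: "y \<in> ?g" "x0 \<in> h" "prefix x0 y" by blast
      have g: "?g \<in> info G i" "take k ?z \<in> ?g" using infoset_in_info[OF assms(1)] a that by auto
      have "\<exists>x\<in>h. prefix x (take k ?z)"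
      proof (cases "x0 = y")
        case True
        then have "?g = h" using info_disjoint[OF assms(1) g(1) assms(2)] yx by blast
        then show ?thesis using g(2) by blast
      next
        case False
        then have "precedes i h ?g"
          using yx assms(2) g(1) unfolding precedes_def strict_prefix_def by blast
        then show ?thesis using precedes_strict_prefix[OF assms(1) _ g(2)] by (meson prefix_order.less_imp_le)
      qed
      then show False using assms(5) take_is_prefix by (metis prefix_order.dual_order.trans)
    qed
    then show "(\<rho>(i := splice_strat h \<sigma>t (\<rho> i))) j (infoset G j (take k ?z)) = \<rho> j (infoset G j (take k ?z))"
      unfolding splice_strat_def by auto
  qed
  then show ?thesis
    using outcome_std_eqI[OF std_profile_upd[OF assms(3)] z(1)] splice_strat_std_strat assms(1,3,4)
    unfolding std_profile_def by blast
qed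

lemma zeta_splice_reaching:
  assumes "i \<in> pl G" "h \<in> info G i" "s \<in> Si_h G i h" "t \<in> Si_h G i h" "\<sigma>s \<in> s" "\<sigma>t \<in> t"
    and "t' \<in> Strat G i" "splice_strat h \<sigma>t \<sigma>s \<in> t'" "sm \<in> Sm_h G i h"
  shows "zeta G (sm(i := t')) = zeta G (sm(i := t))"
proof -
  have s: "s \<in> Strat G i" and t: "t \<in> Strat G i" using assms(3,4) Si_h_subset by auto
  obtain sms where sms: "sms \<in> Sminus G i" "reaches G (sms(i := s)) h"
    using assms(3) unfolding Si_h_def by blast
  obtain \<tau> where \<tau>: "represents \<tau> (sms(i := s))" "\<tau> i = \<sigma>s" using represents_exists[OF sms(1) s assms(5)] .
  obtain xs where xs: "xs \<in> h" "on_path G \<tau> xs" using sms(2) reaches_iff_on_path[OF \<tau>(1)] by blast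
  obtain \<rho> where \<rho>: "represents \<rho> (sm(i := t))" "\<rho> i = \<sigma>t"
    using represents_exists[OF _ t assms(6)] assms(9) Sm_h_subset by blast
  obtain x where "x \<in> h" "prefix x (outcome_std G \<rho>)"
    using reaches_Si_h_Sm_h[OF assms(1,2,4,9)] unfolding reaches_def zeta_eq_outcome_std[OF \<rho>(1)] by blast
  then have "outcome_std G (\<rho>(i := splice_strat h \<sigma>t \<sigma>s)) = outcome_std G \<rho>"
    using outcome_splice_reaching[OF assms(1,2) represents_std_profile[OF \<rho>(1)]
        represents_std_profile[OF \<tau>(1)] _ _ xs] \<rho>(2) \<tau>(2) by metis
  then show ?thesis
    using zeta_eq_outcome_std[OF \<rho>(1)] zeta_eq_outcome_std[OF represents_upd[OF \<rho>(1) assms(7,8)]] by simp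
qed

lemma zeta_splice_avoiding:
  assumes "i \<in> pl G" "h \<in> info G i" "s \<in> Strat G i" "\<sigma>s \<in> s" "\<sigma>t \<in> std_strat G i"
    and "t' \<in> Strat G i" "splice_strat h \<sigma>t \<sigma>s \<in> t'" "sm \<in> Sminus G i - Sm_h G i h"
  shows "zeta G (sm(i := t')) = zeta G (sm(i := s))"
proof -
  obtain \<rho> where \<rho>: "represents \<rho> (sm(i := s))" "\<rho> i = \<sigma>s"
    using represents_exists[OF _ assms(3,4)] assms(8) by blast
  have "\<not> reaches G (sm(i := s)) h" using assms(3,8) unfolding Sm_h_def by blast
  then have "outcome_std G (\<rho>(i := splice_strat h \<sigma>t \<sigma>s)) = outcome_std G \<rho>"
    using outcome_splice_avoiding[OF assms(1,2) represents_std_profile[OF \<rho>(1)] assms(5)] \<rho>(2)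
    unfolding reaches_def zeta_eq_outcome_std[OF \<rho>(1)] by metis
  then show ?thesis
    using zeta_eq_outcome_std[OF \<rho>(1)] zeta_eq_outcome_std[OF represents_upd[OF \<rho>(1) assms(6,7)]] by simp
qed

lemma splice_strategy:
  assumes "i \<in> pl G" "h \<in> info G i" "precedes i h0 h" "s \<in> Si_h G i h" "t \<in> Si_h G i h"
  obtains t' where "t' \<in> Si_h G i h0"
    and "\<And>sm. sm \<in> Sm_h G i h \<Longrightarrow> zeta G (sm(i := t')) = zeta G (sm(i := t))"
    and "\<And>sm. sm \<in> Sminus G i - Sm_h G i h \<Longrightarrow> zeta G (sm(i := t')) = zeta G (sm(i := s))"
proof -
  have s: "s \<in> Strat G i" and t: "t \<in> Strat G i" using assms(4,5) Si_h_subset by auto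
  obtain \<sigma>s \<sigma>t where \<sigma>: "\<sigma>s \<in> s" "\<sigma>t \<in> t" using Strat_class_nonempty s t by metis
  have std: "\<sigma>s \<in> std_strat G i" "\<sigma>t \<in> std_strat G i" using \<sigma> Strat_subset s t by auto
  define \<sigma>' where "\<sigma>' = splice_strat h \<sigma>t \<sigma>s"
  have \<sigma>'_std: "\<sigma>' \<in> std_strat G i" unfolding \<sigma>'_def using splice_strat_std_strat[OF std(2,1)] .
  define t' where "t' = beq_rel i `` {\<sigma>'}"
  have t': "t' \<in> Strat G i" "\<sigma>' \<in> t'"
    unfolding t'_def using class_in_Strat[OF \<sigma>'_std] in_own_class[OF \<sigma>'_std] by auto
  note on_h = zeta_splice_reaching[OF assms(1,2,4,5) \<sigma> t'[unfolded \<sigma>'_def]]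
  note off_h = zeta_splice_avoiding[OF assms(1,2) s \<sigma>(1) std(2) t'[unfolded \<sigma>'_def]]
  obtain sm0 where sm0: "sm0 \<in> Sminus G i" "reaches G (sm0(i := t)) h"
    using assms(5) unfolding Si_h_def by blast
  then have "sm0 \<in> Sm_h G i h" using t unfolding Sm_h_def by blast
  then have "reaches G (sm0(i := t')) h" using on_h sm0(2) unfolding reaches_def by simp
  then have "t' \<in> Si_h G i h0"
    using reaches_if_precedes[OF assms(1,3)] sm0(1) t'(1) unfolding Si_h_def by blast
  then show ?thesis using that on_h off_h by blast
qed

definition rank :: "'i \<Rightarrow> ('i,'a) hist \<Rightarrow> nat" where
  "rank i z = card {z' \<in> Zs G. spref G i z z'}"

lemma strictly_worse_mono:
  assumes "i \<in> pl G" "z \<in> Zs G" "z' \<in> Zs G" "pref G i z z'"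
  shows "{w \<in> Zs G. spref G i z' w} \<subseteq> {w \<in> Zs G. spref G i z w}"
  using pref_trans[OF assms(1)] assms(2-4) unfolding spref_def by blast

lemma pref_iff_rank_le:
  assumes "i \<in> pl G" "z \<in> Zs G" "z' \<in> Zs G"
  shows "pref G i z z' \<longleftrightarrow> rank i z' \<le> rank i z"
proof
  assume "pref G i z z'"
  then show "rank i z' \<le> rank i z"
    unfolding rank_def using strictly_worse_mono[OF assms] finite_Zs by (intro card_mono) auto
next
  assume le: "rank i z' \<le> rank i z"
  show "pref G i z z'"
  proof (rule ccontr)
    assume np: "\<not> pref G i z z'"
    then have "pref G i z' z" using pref_total[OF assms] by blast
    then have "{w \<in> Zs G. spref G i z w} \<subset> {w \<in> Zs G. spref G i z' w}"
      using strictly_worse_mono[OF assms(1,3,2)] np assms(2) unfolding spref_def by blast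
    then have "rank i z < rank i z'" unfolding rank_def using finite_Zs by (intro psubset_card_mono) auto
    then show False using le by simp
  qed
qed

definition rank_utility :: "real \<Rightarrow> 'i \<Rightarrow> ('i,'a) hist \<Rightarrow> real" where
  "rank_utility K i z = - ((1/K) ^ rank i z)"

lemma rank_utility_in_utils:
  assumes "i \<in> pl G" "K > 1"
  shows "rank_utility K i \<in> utils G i"
  unfolding utils_def
proof (intro CollectI ballI)
  fix z z' assume z: "z \<in> Zs G" "z' \<in> Zs G"
  have "rank_utility K i z' \<le> rank_utility K i z \<longleftrightarrow> (1/K) ^ rank i z \<le> (1/K) ^ rank i z'"
    unfolding rank_utility_def by simp
  also have "\<dots> \<longleftrightarrow> rank i z' \<le> rank i z" using assms(2) by (intro power_decreasing_iff) auto
  also have "\<dots> \<longleftrightarrow> pref G i z z'" using pref_iff_rank_le[OF assms(1) z] by simp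
  finally show "rank_utility K i z' \<le> rank_utility K i z \<longleftrightarrow> pref G i z z'" .
qed

subsection \<open>Sequential rationality excludes conditional B-dominance\<close>

lemma cps_vanishes_outside:
  assumes "cps G i \<mu>" "E \<in> cond_events G i" "sm \<in> Sminus G i - E"
  shows "\<mu> E sm = 0"
proof -
  have E: "E \<subseteq> Sminus G i" using assms(2) Sm_h_subset unfolding cond_events_def by blast
  have nonneg: "\<forall>sm\<in>Sminus G i. 0 \<le> \<mu> E sm" and sums: "sum (\<mu> E) (Sminus G i) = 1" "sum (\<mu> E) E = 1"
    using assms(1,2) unfolding cps_def by blast+
  have "sum (\<mu> E) (Sminus G i - E) = 0"
    using sum.subset_diff[OF E finite_Sminus, of "\<mu> E"] sums by simp
  then show ?thesis using sum_nonneg_eq_0_iff[of "Sminus G i - E" "\<mu> E"] finite_Sminus nonneg assms(3) by auto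
qed

lemma cond_Bdom_Strat_iff:
  "cond_Bdom G i (Strat G) s \<longleftrightarrow> s \<in> Strat G i \<and>
    (\<exists>h\<in>Hi_of G i s. Si_h G i h \<times> Sm_h G i h \<noteq> {} \<and> Bdom G i (Si_h G i h) (Sm_h G i h) s)"
proof -
  have "Strat G i \<inter> Si_h G i h = Si_h G i h" "(\<Pi>\<^sub>E j\<in>pl G - {i}. Strat G j) \<inter> Sm_h G i h = Sm_h G i h"
    for h using Si_h_subset Sm_h_subset unfolding Sminus_def by blast+
  then show ?thesis unfolding cond_Bdom_def Let_def by simp
qed

lemma utils_strict:
  "u \<in> utils G i \<Longrightarrow> z \<in> Zs G \<Longrightarrow> z' \<in> Zs G \<Longrightarrow> spref G i z z' \<Longrightarrow> u z' < u z"
  unfolding utils_def spref_def by force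

lemma cps_charges_some:
  assumes "cps G i \<mu>" "E \<in> cond_events G i"
  shows "{sm \<in> E. 0 < \<mu> E sm} \<noteq> {}"
proof
  assume none: "{sm \<in> E. 0 < \<mu> E sm} = {}"
  have "E \<subseteq> Sminus G i" using assms(2) Sm_h_subset unfolding cond_events_def by blast
  moreover have "\<forall>sm\<in>Sminus G i. 0 \<le> \<mu> E sm" "sum (\<mu> E) E = 1"
    using assms unfolding cps_def by blast+
  ultimately have "\<forall>sm\<in>E. \<mu> E sm = 0" "sum (\<mu> E) E = 1" using none by force+
  then show False by simp
qed

lemma expected_utility_less_if_wdom:
  assumes "u \<in> utils G i" "cps G i \<mu>" "E \<in> cond_events G i" "s \<in> Strat G i" "t \<in> Strat G i"
    and "wdom G i P {sm \<in> E. 0 < \<mu> E sm} s t"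
  shows "(\<Sum>sm\<in>Sminus G i. u (zeta G (sm(i := s))) * \<mu> E sm)
       < (\<Sum>sm\<in>Sminus G i. u (zeta G (sm(i := t))) * \<mu> E sm)"
proof -
  have E: "E \<subseteq> Sminus G i" using assms(3) Sm_h_subset unfolding cond_events_def by blast
  have nonneg: "\<And>sm. sm \<in> Sminus G i \<Longrightarrow> 0 \<le> \<mu> E sm"
    using assms(2,3) unfolding cps_def by blast
  have in_Zs: "zeta G (sm(i := s)) \<in> Zs G" "zeta G (sm(i := t)) \<in> Zs G" if "sm \<in> Sminus G i" for sm
    using zeta_upd_in_Zs[OF that] assms(4,5) by blast+
  obtain sm0 where sm0: "sm0 \<in> E" "0 < \<mu> E sm0" "spref G i (zeta G (sm0(i := t))) (zeta G (sm0(i := s)))"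
    using assms(6) unfolding wdom_def by blast
  show ?thesis
  proof (rule sum_mult_less_on_support[where f = "\<lambda>sm. u (zeta G (sm(i := s)))"
        and g = "\<lambda>sm. u (zeta G (sm(i := t)))" and p = "\<mu> E",
        OF finite_Sminus[of i] nonneg _ _ sm0(2)])
    show "u (zeta G (sm(i := s))) \<le> u (zeta G (sm(i := t)))"
      if "sm \<in> Sminus G i" "0 < \<mu> E sm" for sm
    proof -
      have "sm \<in> E" using that cps_vanishes_outside[OF assms(2,3)] by force
      then have "pref G i (zeta G (sm(i := t))) (zeta G (sm(i := s)))"
        using assms(6) that(2) unfolding wdom_def by blast
      then show ?thesis using assms(1) in_Zs[OF that(1)] unfolding utils_def by simp
    qed
    show "sm0 \<in> Sminus G i" using sm0(1) E by blast
    then show "u (zeta G (sm0(i := s))) < u (zeta G (sm0(i := t)))"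
      using utils_strict[OF assms(1) in_Zs(2) in_Zs(1) sm0(3)] by blast
  qed
qed

lemma seq_rational_imp_not_cond_Bdom:
  assumes "i \<in> pl G" "s \<in> Strat G i" "seq_rational G i s"
  shows "\<not> cond_Bdom G i (Strat G) s"
proof
  assume "cond_Bdom G i (Strat G) s"
  then obtain h where h: "h \<in> Hi_of G i s" and dom: "Bdom G i (Si_h G i h) (Sm_h G i h) s"
    unfolding cond_Bdom_Strat_iff by blast
  obtain u \<mu> where u: "u \<in> utils G i" and cps: "cps G i \<mu>"
    and opt: "\<And>t. t \<in> Si_h G i h \<Longrightarrow>
        (\<Sum>sm\<in>Sminus G i. u (zeta G (sm(i := t))) * \<mu> (Sm_h G i h) sm)
      \<le> (\<Sum>sm\<in>Sminus G i. u (zeta G (sm(i := s))) * \<mu> (Sm_h G i h) sm)"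
    using assms(3) h unfolding seq_rational_def by blast
  have E: "Sm_h G i h \<in> cond_events G i" using h unfolding cond_events_def Hi_of_def by auto
  let ?Q = "{sm \<in> Sm_h G i h. 0 < \<mu> (Sm_h G i h) sm}"
  obtain t where t: "t \<in> Si_h G i h" and "wdom G i (Si_h G i h) ?Q s t"
    using dom[unfolded Bdom_def, THEN conjunct2, rule_format, of ?Q] cps_charges_some[OF cps E] by blast
  then show False
    using expected_utility_less_if_wdom[OF u cps E assms(2)] opt[OF t] Si_h_subset by fastforce
qed

end

subsection \<open>Conditionally B-undominated strategies are sequentially rational\<close>

locale sufficiency = finite_game G for G :: "('i,'a) game" +
  fixes i :: 'i and s :: "('i,'a) strat"
  assumes player: "i \<in> pl G" and strategy: "s \<in> Strat G i"
    and not_cond_Bdom: "\<not> cond_Bdom G i (Strat G) s"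
begin

lemma undominated_on_some_subset:
  assumes "h \<in> Hi_of G i s"
  shows "\<exists>Q. Q \<noteq> {} \<and> Q \<subseteq> Sm_h G i h \<and> (\<forall>t\<in>Si_h G i h. \<not> wdom G i (Si_h G i h) Q s t)"
proof -
  have h: "h \<in> info G i" "s \<in> Si_h G i h" using assms unfolding Hi_of_def by auto
  then have "Si_h G i h \<times> Sm_h G i h \<noteq> {}" using Sm_h_nonempty[OF player] by blast
  then have "\<not> Bdom G i (Si_h G i h) (Sm_h G i h) s"
    using not_cond_Bdom strategy assms unfolding cond_Bdom_Strat_iff by blast
  then show ?thesis using h(2) unfolding Bdom_def by blast
qed

definition witness :: "('i,'a) iset \<Rightarrow> ('i \<Rightarrow> ('i,'a) strat) set" where
  "witness h = (SOME Q. Q \<noteq> {} \<and> Q \<subseteq> Sm_h G i h \<and> (\<forall>t\<in>Si_h G i h. \<not> wdom G i (Si_h G i h) Q s t))"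

lemma witness:
  assumes "h \<in> Hi_of G i s"
  shows "witness h \<noteq> {}" "witness h \<subseteq> Sm_h G i h"
    and "\<And>t. t \<in> Si_h G i h \<Longrightarrow> \<not> wdom G i (Si_h G i h) (witness h) s t"
  using someI_ex[OF undominated_on_some_subset[OF assms]] unfolding witness_def by blast+

lemma witness_subset_Sminus: "h \<in> Hi_of G i s \<Longrightarrow> witness h \<subseteq> Sminus G i"
  using witness(2) Sm_h_subset by blast

lemma witness_rank_cases:
  assumes "h \<in> Hi_of G i s" "t \<in> Si_h G i h"
  defines "rs \<equiv> \<lambda>sm. rank i (zeta G (sm(i := s)))" and "rt \<equiv> \<lambda>sm. rank i (zeta G (sm(i := t)))"
  shows "(\<exists>q\<in>witness h. rt q < rs q) \<or> (\<forall>q\<in>witness h. rt q = rs q)"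
proof -
  have s_h: "s \<in> Si_h G i h" using assms(1) unfolding Hi_of_def by blast
  have t: "t \<in> Strat G i" using assms(2) Si_h_subset by blast
  have pref_iff: "pref G i (zeta G (q(i := x))) (zeta G (q(i := y))) \<longleftrightarrow>
      rank i (zeta G (q(i := y))) \<le> rank i (zeta G (q(i := x)))"
    if "q \<in> witness h" "x \<in> {s, t}" "y \<in> {s, t}" for q x y
    using pref_iff_rank_le[OF player zeta_upd_in_Zs zeta_upd_in_Zs] that witness_subset_Sminus[OF assms(1)]
      strategy t by blast
  show ?thesis
  proof (cases "\<forall>q\<in>witness h. pref G i (zeta G (q(i := t))) (zeta G (q(i := s)))")
    case True
    then have "\<forall>q\<in>witness h. pref G i (zeta G (q(i := s))) (zeta G (q(i := t)))"
      using witness(3)[OF assms(1,2)] s_h assms(2) unfolding wdom_def spref_def by blast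
    then show ?thesis using True pref_iff unfolding rs_def rt_def by (simp add: le_antisym)
  next
    case False
    then show ?thesis using pref_iff unfolding rs_def rt_def by (meson insertI1 insert_subset not_le subset_insertI)
  qed
qed

definition scale :: real where
  "scale = real (card (Sminus G i)) + 2"

definition weight :: "('i,'a) iset \<Rightarrow> ('i \<Rightarrow> ('i,'a) strat) \<Rightarrow> real" where
  "weight h sm = (if sm \<in> witness h then scale ^ rank i (zeta G (sm(i := s))) else 0)"

lemma scale_gt_1: "1 < scale"
  unfolding scale_def by simp

lemma weight_nonneg: "0 \<le> weight h sm"
  using scale_gt_1 unfolding weight_def by simp

lemma finite_Sm_h: "finite (Sm_h G i h)"
  by (rule finite_subset[OF Sm_h_subset finite_Sminus])

lemma sum_weight_pos:
  assumes "h \<in> Hi_of G i s"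
  shows "0 < sum (weight h) (Sm_h G i h)"
proof -
  obtain q where q: "q \<in> witness h" using witness(1)[OF assms] by blast
  show ?thesis
  proof (rule sum_pos2[OF finite_Sm_h])
    show "q \<in> Sm_h G i h" using q witness(2)[OF assms] by blast
    show "0 < weight h q" using q scale_gt_1 unfolding weight_def by simp
  qed (rule weight_nonneg)
qed

lemma weight_optimal:
  assumes "h \<in> Hi_of G i s" "t \<in> Si_h G i h"
  shows "(\<Sum>sm\<in>Sminus G i. rank_utility scale i (zeta G (sm(i := t))) * weight h sm)
       \<le> (\<Sum>sm\<in>Sminus G i. rank_utility scale i (zeta G (sm(i := s))) * weight h sm)"
proof -
  let ?Q = "witness h"
  define rs where "rs sm = rank i (zeta G (sm(i := s)))" for sm
  define rt where "rt sm = rank i (zeta G (sm(i := t)))" for sm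
  have Q: "?Q \<subseteq> Sminus G i" "finite ?Q"
    using witness_subset_Sminus[OF assms(1)] finite_Sminus finite_subset by auto
  have on_witness: "(\<Sum>sm\<in>Sminus G i. f sm * weight h sm) = (\<Sum>sm\<in>?Q. f sm * scale ^ rs sm)" for f
    using Q(1) finite_Sminus unfolding weight_def rs_def by (intro sum.mono_neutral_cong_right) auto
  have "(\<Sum>sm\<in>?Q. rank_utility scale i (zeta G (sm(i := s))) * scale ^ rs sm) = - real (card ?Q)"
    using scale_gt_1 unfolding rank_utility_def rs_def by (simp add: power_one_over)
  moreover have "(\<Sum>sm\<in>?Q. rank_utility scale i (zeta G (sm(i := t))) * scale ^ rs sm)
      = - (\<Sum>q\<in>?Q. (1/scale) ^ rt q * scale ^ rs q)"
    unfolding rank_utility_def rt_def by (simp add: sum_negf)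
  moreover have "real (card ?Q) \<le> (\<Sum>q\<in>?Q. (1/scale) ^ rt q * scale ^ rs q)"
  proof (rule sum_power_ratio_ge_card[OF Q(2)])
    show "1 \<le> scale" using scale_gt_1 by simp
    show "real (card ?Q) \<le> scale" using card_mono[OF finite_Sminus Q(1)] unfolding scale_def by simp
    show "(\<exists>q\<in>?Q. rt q < rs q) \<or> (\<forall>q\<in>?Q. rt q = rs q)"
      using witness_rank_cases[OF assms] unfolding rs_def rt_def .
  qed
  ultimately show ?thesis unfolding on_witness by simp
qed

text \<open>Splicing transfers the optimality of s at an earlier information set h' to the
  part of the belief at h' that is consistent with reaching h.\<close>
lemma restricted_weight_optimal:
  assumes "h \<in> Hi_of G i s" "h' \<in> Hi_of G i s" "h' = h \<or> precedes i h' h" "t \<in> Si_h G i h"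
  shows "(\<Sum>sm\<in>Sm_h G i h. rank_utility scale i (zeta G (sm(i := t))) * weight h' sm)
       \<le> (\<Sum>sm\<in>Sm_h G i h. rank_utility scale i (zeta G (sm(i := s))) * weight h' sm)"
  using assms(3)
proof
  assume "h' = h"
  have "(\<Sum>sm\<in>Sm_h G i h. f sm * weight h sm) = (\<Sum>sm\<in>Sminus G i. f sm * weight h sm)" for f
    using finite_Sminus Sm_h_subset witness(2)[OF assms(1)] unfolding weight_def
    by (intro sum.mono_neutral_left) auto
  then show ?thesis using weight_optimal[OF assms(1,4)] \<open>h' = h\<close> by simp
next
  assume precedes: "precedes i h' h"
  define u where "u x sm = rank_utility scale i (zeta G (sm(i := x))) * weight h' sm" for x sm
  have h: "h \<in> info G i" "s \<in> Si_h G i h" using assms(1) unfolding Hi_of_def by auto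
  obtain t' where t': "t' \<in> Si_h G i h'"
    and on_h: "\<And>sm. sm \<in> Sm_h G i h \<Longrightarrow> zeta G (sm(i := t')) = zeta G (sm(i := t))"
    and off_h: "\<And>sm. sm \<in> Sminus G i - Sm_h G i h \<Longrightarrow> zeta G (sm(i := t')) = zeta G (sm(i := s))"
    using splice_strategy[OF player h(1) precedes h(2) assms(4)] by blast
  have split_Sminus: "sum f (Sminus G i) = sum f (Sminus G i - Sm_h G i h) + sum f (Sm_h G i h)" for f :: "_ \<Rightarrow> real"
    using sum.subset_diff[OF Sm_h_subset finite_Sminus] by simp
  have "sum (u t') (Sminus G i - Sm_h G i h) = sum (u s) (Sminus G i - Sm_h G i h)"
    using off_h unfolding u_def by simp
  moreover have "sum (u t') (Sm_h G i h) = sum (u t) (Sm_h G i h)"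
    using on_h unfolding u_def by simp
  moreover have "sum (u t') (Sminus G i) \<le> sum (u s) (Sminus G i)"
    using weight_optimal[OF assms(2) t'] unfolding u_def .
  ultimately show ?thesis using split_Sminus[of "u t'"] split_Sminus[of "u s"] unfolding u_def by simp
qed

lemma finite_Hi_of: "finite (Hi_of G i s)"
  using finite_info[OF player] unfolding Hi_of_def by auto

text \<open>Sorting by depth ensures that an information set never comes after one it precedes.\<close>
definition levels :: "('i,'a) iset list" where
  "levels = sort_key (depth i) (SOME xs. set xs = Hi_of G i s \<and> distinct xs)"

lemma levels: "set levels = Hi_of G i s" "sorted (map (depth i) levels)"
proof -
  show "set levels = Hi_of G i s"
    using someI_ex[OF finite_distinct_list[OF finite_Hi_of]] unfolding levels_def by simp
  show "sorted (map (depth i) levels)" unfolding levels_def by simp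
qed

text \<open>The constant final level charges every nonempty event, so every conditioning event has a
  first level charging it.\<close>
definition belief_seq :: "nat \<Rightarrow> ('i \<Rightarrow> ('i,'a) strat) \<Rightarrow> real" where
  "belief_seq k = (if k < length levels then weight (levels ! k) else (\<lambda>_. 1))"

definition belief :: "('i \<Rightarrow> ('i,'a) strat) set \<Rightarrow> ('i \<Rightarrow> ('i,'a) strat) \<Rightarrow> real" where
  "belief = lex_cond belief_seq"

lemma belief_seq_nonneg: "0 \<le> belief_seq k sm"
  unfolding belief_seq_def using weight_nonneg by simp

lemma cond_event_props:
  assumes "E \<in> cond_events G i"
  shows "E \<subseteq> Sminus G i" "finite E" "0 < sum (belief_seq (length levels)) E"
proof -
  obtain h where h: "h \<in> info G i" "E = Sm_h G i h" using assms unfolding cond_events_def by blast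
  show E: "E \<subseteq> Sminus G i" using h(2) Sm_h_subset by simp
  then show "finite E" using finite_subset finite_Sminus by auto
  then show "0 < sum (belief_seq (length levels)) E"
    using Sm_h_nonempty[OF player h(1)] h(2) unfolding belief_seq_def by (simp add: card_gt_0_iff)
qed

lemma belief_cps: "cps G i belief"
  unfolding cps_def belief_def
proof (intro conjI ballI allI impI)
  fix E assume E: "E \<in> cond_events G i"
  note props = cond_event_props[OF E]
  show "0 \<le> lex_cond belief_seq E sm" for sm by (rule lex_cond_nonneg[OF belief_seq_nonneg])
  show "sum (lex_cond belief_seq E) (Sminus G i) = 1" "sum (lex_cond belief_seq E) E = 1"
    using sum_lex_cond_eq_1[where \<rho> = belief_seq and k = "length levels", OF finite_Sminus[of i] props(1,3)]
    by auto
next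
  fix E E' A assume "E \<in> cond_events G i" "E' \<in> cond_events G i" "A \<subseteq> E'" "E' \<subseteq> E"
  then show "sum (lex_cond belief_seq E) A = sum (lex_cond belief_seq E') A * sum (lex_cond belief_seq E) E'"
    using lex_cond_chain_rule[where \<rho> = belief_seq and k' = "length levels", OF belief_seq_nonneg]
      cond_event_props(2,3) by blast
qed

lemma first_charging_level:
  assumes "h \<in> Hi_of G i s"
  defines "k \<equiv> lex_level belief_seq (Sm_h G i h)"
  shows "k < length levels" "levels ! k \<in> Hi_of G i s"
    "levels ! k = h \<or> precedes i (levels ! k) h" "belief_seq k = weight (levels ! k)"
    "0 < sum (weight (levels ! k)) (Sm_h G i h)"
proof -
  obtain p where p: "p < length levels" "levels ! p = h" using assms(1) levels(1) by (metis in_set_conv_nth)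
  have "0 < sum (belief_seq p) (Sm_h G i h)"
    using sum_weight_pos[OF assms(1)] p unfolding belief_seq_def by simp
  then have "k \<le> p" and pos: "0 < sum (belief_seq k) (Sm_h G i h)"
    unfolding k_def using lex_level_le[of belief_seq p] sum_lex_level_pos[of belief_seq p] by auto
  then show k: "k < length levels" using p(1) by simp
  show h': "levels ! k \<in> Hi_of G i s" "belief_seq k = weight (levels ! k)"
    using k levels(1) nth_mem unfolding belief_seq_def by auto
  show "0 < sum (weight (levels ! k)) (Sm_h G i h)" using pos unfolding h'(2) .
  have "depth i (levels ! k) \<le> depth i h"
    using sorted_nth_mono[OF levels(2) \<open>k \<le> p\<close>] p k by simp
  then have "\<not> precedes i h (levels ! k)" using depth_less_if_precedes[OF player] by (meson leD)
  have "\<exists>sm\<in>Sm_h G i h. 0 < weight (levels ! k) sm"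
  proof (rule ccontr)
    assume "\<not> ?thesis"
    then have "sum (weight (levels ! k)) (Sm_h G i h) \<le> 0" by (simp add: not_less sum_nonpos)
    then show False using pos h'(2) by simp
  qed
  then obtain sm where "sm \<in> Sm_h G i h" "0 < weight (levels ! k) sm" by blast
  then have "sm \<in> Sm_h G i (levels ! k)" "sm \<in> Sm_h G i h"
    using witness(2)[OF h'(1)] unfolding weight_def by (auto split: if_splits)
  then show "levels ! k = h \<or> precedes i (levels ! k) h"
    using Hi_of_comparable[OF player assms(1) h'(1)] \<open>\<not> precedes i h (levels ! k)\<close> by blast
qed

lemma belief_optimal:
  assumes "h \<in> Hi_of G i s" "t \<in> Si_h G i h"
  shows "(\<Sum>sm\<in>Sminus G i. rank_utility scale i (zeta G (sm(i := t))) * belief (Sm_h G i h) sm)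
       \<le> (\<Sum>sm\<in>Sminus G i. rank_utility scale i (zeta G (sm(i := s))) * belief (Sm_h G i h) sm)"
proof -
  let ?h' = "levels ! lex_level belief_seq (Sm_h G i h)"
  note level = first_charging_level[OF assms(1)]
  have "(\<Sum>sm\<in>Sminus G i. f sm * belief (Sm_h G i h) sm)
      = (\<Sum>sm\<in>Sm_h G i h. f sm * weight ?h' sm) / sum (weight ?h') (Sm_h G i h)" for f
    using sum_mult_lex_cond[OF finite_Sminus Sm_h_subset] level(4) unfolding belief_def by simp
  then show ?thesis
    using restricted_weight_optimal[OF assms(1) level(2,3) assms(2)] level(5) by (simp add: divide_right_mono)
qed

lemma seq_rational: "seq_rational G i s"
  unfolding seq_rational_def
  using rank_utility_in_utils[OF player scale_gt_1] belief_cps belief_optimal by blast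

end

theorem theorem1:
  fixes G :: "('i,'a) game" and i :: 'i and s :: "('i,'a) strat"
  assumes "wf_game G" and "i \<in> pl G" and "s \<in> Strat G i"
  shows "seq_rational G i s \<longleftrightarrow> \<not> cond_Bdom G i (Strat G) s"
proof
  interpret finite_game G by (rule finite_game.intro) (rule assms(1))
  show "\<not> cond_Bdom G i (Strat G) s" if "seq_rational G i s"
    using seq_rational_imp_not_cond_Bdom assms(2,3) that by blast
  show "seq_rational G i s" if "\<not> cond_Bdom G i (Strat G) s"
  proof -
    interpret sufficiency G i s using assms that by unfold_locales
    show ?thesis by (rule seq_rational)
  qed
qed

end
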